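(* Let $k,m$ be positive integers, $\phi\in J_{k,m}(\mathcal O_K)$ with power series expansion $\phi=\sum_{\alpha,\beta\ge0}\chi_{\alpha,\beta}(\tau)z_1^\alpha z_2^\beta$, and put $\xi_\nu=D_\nu\phi$ for $\nu\ge0$. Then for every $\nu\ge0$, $$\chi_{\nu,\nu}(\tau)=\frac{1}{\nu!\,4^\nu}\sum_{\mu=0}^{\nu}(-1)^{\nu-\mu}(8\pi i m)^{\mu}\binom{\nu}{\mu}\frac{(k+2\nu-2\mu-1)\,(k+\nu-\mu-2)!}{(k+2\nu-\mu-1)!}\,\xi^{(\mu)}_{\nu-\mu}(\tau),$$ where $g^{(\mu)}=\bigl(\frac{\partial}{\partial\tau}\bigr)^\mu g$.
   Context: Notation: $\mathcal H$ is the upper half plane, $e(x)=e^{2\pi i x}$, $K=\mathbb Q(i)$, $\mathcal O_K=\mathbb Z[i]$, $\mathcal O_K^\times=\{\pm1,\pm i\}$, $N(x)=x\bar x$, $\mathcal O_K^\sharp=\frac i2\mathcal O_K$. For integers $k,m$, $\epsilon\in\mathcal O_K^\times$, $M=\begin{pmatrix}a&b\\c&d\end{pmatrix}\in SL(2,\mathbb R)$ and $\phi$ a function on $\mathcal H\times\mathbb C^2$: $(\phi|_{k,m}\epsilon M)(\tau,z_1,z_2)=\epsilon^{-k}(c\tau+d)^{-k}e^{-2\pi i m c z_1z_2/(c\tau+d)}\phi\bigl(M\tau,\tfrac{\epsilon z_1}{c\tau+d},\tfrac{\bar\epsilon z_2}{c\tau+d}\bigr)$, $M\tau=\frac{a\tau+b}{c\tau+d}$;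 for $\lambda,\mu\in\mathcal O_K$, $(\phi|_m[\lambda,\mu])(\tau,z_1,z_2)=e^{2\pi i m(N(\lambda)\tau+\bar\lambda z_1+\lambda z_2)}\phi(\tau,z_1+\lambda\tau+\mu,z_2+\bar\lambda\tau+\bar\mu)$. For positive integers $k,m$, $J_{k,m}(\mathcal O_K)$ is the space of holomorphic $\phi:\mathcal H\times\mathbb C^2\to\mathbb C$ with $\phi|_{k,m}\epsilon M=\phi$ for all $\epsilon\in\mathcal O_K^\times$, $M\in SL(2,\mathbb Z)$, $\phi|_m[\lambda,\mu]=\phi$ for all $\lambda,\mu\in\mathcal O_K$, and with a Fourier expansion $\phi=\sum_{n\ge0}\sum_{r\in\mathcal O_K^\sharp,\ nm\ge N(r)}c_\phi(n,r)\,e(n\tau+rz_1+\bar rz_2)$. The diagonal part of $\phi$ is $\phi_0=\sum_{\nu\ge0}\chi_{\nu,\nu}(\tau)(z_1z_2)^\nu$. Let $L_{k,m}=8\pi i m\partial_\tau-\frac{2k-2}{z_1}\partial_{z_2}-\frac{2k-2}{z_2}\partial_{z_1}-4\partial_{z_1}\partial_{z_2}$, $\tilde D_\nu=L_{k+2\nu-2,m}\circ\cdots\circ L_{k+2,m}\circ L_{k,m}$ ($\tilde D_0=\mathrm{id}$), and $D_\nu\phi(\tau):=(\tilde D_\nu\phi_0)(\tau,0,0)$. *)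

theory Defs
  imports "HOL-Analysis.Analysis"
begin

text \<open>Functions on H x C^2 are represented curried: phi tau z1 z2.\<close>

type_synonym jfun = "complex \<Rightarrow> complex \<Rightarrow> complex \<Rightarrow> complex"

definition ee :: "complex \<Rightarrow> complex" where
  "ee x = exp (2 * pi * \<i> * x)"

definition upper_half :: "complex set" where
  "upper_half = {t. Im t > 0}"

definition holo3 :: "jfun \<Rightarrow> (complex \<times> complex \<times> complex) set \<Rightarrow> bool" where
  "holo3 f U \<longleftrightarrow> open U \<and>
     (\<forall>p\<in>U. \<exists>D. ((\<lambda>(t, a, b). f t a b) has_derivative D) (at p) \<and>
        (\<forall>v. D (\<i> * fst v, \<i> * fst (snd v), \<i> * snd (snd v)) = \<i> * D v))"

definition slash :: "nat \<Rightarrow> nat \<Rightarrow> complex \<Rightarrow> int \<Rightarrow> int \<Rightarrow> int \<Rightarrow> int \<Rightarrow> jfun \<Rightarrow> jfun" where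
  "slash k m eps a b c d phi = (\<lambda>t z1 z2.
     inverse (eps ^ k) * inverse ((of_int c * t + of_int d) ^ k) *
     exp (- 2 * pi * \<i> * of_nat m * of_int c * z1 * z2 / (of_int c * t + of_int d)) *
     phi ((of_int a * t + of_int b) / (of_int c * t + of_int d))
         (eps * z1 / (of_int c * t + of_int d)) (cnj eps * z2 / (of_int c * t + of_int d)))"

definition heis :: "nat \<Rightarrow> complex \<Rightarrow> complex \<Rightarrow> jfun \<Rightarrow> jfun" where
  "heis m l u phi = (\<lambda>t z1 z2.
     ee (of_nat m * (of_real ((cmod l)\<^sup>2) * t + cnj l * z1 + l * z2)) *
     phi t (z1 + l * t + u) (z2 + cnj l * t + cnj u))"

definition gauss_ints :: "complex set" where
  "gauss_ints = {Complex (of_int x) (of_int y) | x y. True}"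

definition units_K :: "complex set" where
  "units_K = {1, -1, \<i>, -\<i>}"

definition dual_lattice :: "complex set" where
  "dual_lattice = {\<i> / 2 * x | x. x \<in> gauss_ints}"

definition jacobi_form :: "nat \<Rightarrow> nat \<Rightarrow> jfun \<Rightarrow> bool" where
  "jacobi_form k m phi \<longleftrightarrow>
     holo3 phi {p. Im (fst p) > 0} \<and>
     (\<forall>eps\<in>units_K. \<forall>a b c d :: int. a * d - b * c = 1 \<longrightarrow>
        (\<forall>t z1 z2. t \<in> upper_half \<longrightarrow> slash k m eps a b c d phi t z1 z2 = phi t z1 z2)) \<and>
     (\<forall>l\<in>gauss_ints. \<forall>u\<in>gauss_ints. \<forall>t z1 z2. t \<in> upper_half \<longrightarrow>
        heis m l u phi t z1 z2 = phi t z1 z2) \<and>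
     (\<exists>cf :: nat \<Rightarrow> complex \<Rightarrow> complex. \<forall>t z1 z2. t \<in> upper_half \<longrightarrow>
        ((\<lambda>(n, r). cf n r * ee (of_nat n * t + r * z1 + cnj r * z2)) has_sum phi t z1 z2)
          {(n, r). r \<in> dual_lattice \<and> (cmod r)\<^sup>2 \<le> real (n * m)})"

definition diag_part :: "(nat \<Rightarrow> nat \<Rightarrow> complex \<Rightarrow> complex) \<Rightarrow> jfun" where
  "diag_part chi = (\<lambda>t z1 z2. \<Sum>\<nu>. chi \<nu> \<nu> t * (z1 * z2) ^ \<nu>)"

definition Lop :: "nat \<Rightarrow> nat \<Rightarrow> jfun \<Rightarrow> jfun" where
  "Lop k m f = (\<lambda>t z1 z2.
     8 * pi * \<i> * of_nat m * deriv (\<lambda>s. f s z1 z2) t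
     - (2 * of_nat k - 2) / z1 * deriv (\<lambda>w. f t z1 w) z2
     - (2 * of_nat k - 2) / z2 * deriv (\<lambda>v. f t v z2) z1
     - 4 * deriv (\<lambda>w. deriv (\<lambda>v. f t v w) z1) z2)"

fun Dtilde :: "nat \<Rightarrow> nat \<Rightarrow> nat \<Rightarrow> jfun \<Rightarrow> jfun" where
  "Dtilde k m 0 f = f"
| "Dtilde k m (Suc j) f = Lop (k + 2 * j) m (Dtilde k m j f)"

text \<open>D_nu phi (tau) = (tilde D_nu phi_0)(tau,0,0), read as the value at (0,0) of the
  holomorphic extension, i.e. the limit from the region z1, z2 nonzero where L is defined.\<close>
definition Dop :: "nat \<Rightarrow> nat \<Rightarrow> nat \<Rightarrow> (nat \<Rightarrow> nat \<Rightarrow> complex \<Rightarrow> complex) \<Rightarrow> complex \<Rightarrow> complex" where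
  "Dop k m \<nu> chi t =
     Lim (at (0, 0) within {p. fst p \<noteq> 0 \<and> snd p \<noteq> 0})
         (\<lambda>(z1, z2). Dtilde k m \<nu> (diag_part chi) t z1 z2)"

end

theory Submission
  imports Defs
begin

(* Expanding the exponentials of the Fourier expansion
   phi = sum c(N,r) e(N tau + r z1 + cnj r z2) in z1, z2 shows that every diagonal
   Taylor coefficient is a q-series, chi_{nu,nu}(tau) = sum_N beta(N,nu) e(N tau), and
   that the diagonal part is phi_0(tau,z1,z2) = H_beta(tau, z1 z2), where
   H_beta(tau,x) = sum_N (sum_n beta(N,n) x^n) e(N tau).  On functions of this shape
   L_{K,m} acts on the coefficient array only:
     (L beta)(N,n) = 8 pi i m (2 pi i N) beta(N,n) - 4 (n+1)(n+K) beta(N,n+1).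
   So tilde D_j phi_0 = H_{B_j} for explicit arrays B_j, xi_j is the q-series of
   B_j(.,0), and the "moments" w(j,n,a) = sum_N (2 pi i N)^a B_j(N,n) e(N tau) satisfy a
   three-term ladder recursion in (j,n,a).  A purely combinatorial lemma inverts this
   recursion and yields the stated coefficients.  For k = 1 the unit i forces
   chi_{nu,nu} = 0, and then every xi_j vanishes as well. *)

section \<open>Inverting the ladder recursion\<close>

text \<open>The coefficients of the inversion formula, with the normalising factor
  1/(n! 4^n) included; they vanish for mu > n.\<close>

definition inv_coeff :: "nat \<Rightarrow> nat \<Rightarrow> nat \<Rightarrow> complex" where
  "inv_coeff K n \<mu> = (-1) ^ (n - \<mu>) * of_nat (n choose \<mu>) *
      (of_nat (K + 2 * n - 2 * \<mu> - 1) * fact (K + n - \<mu> - 2) / fact (K + 2 * n - \<mu> - 1)) /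
      (fact n * 4 ^ n)"

lemma inv_coeff_beyond: "\<mu> > n \<Longrightarrow> inv_coeff K n \<mu> = 0"
  by (simp add: inv_coeff_def)

lemma inv_coeff_0_0: "K \<ge> 2 \<Longrightarrow> inv_coeff K 0 0 = 1"
proof -
  assume "K \<ge> 2"
  then obtain K' where K: "K = Suc (Suc K')" by (metis add_2_eq_Suc le_Suc_ex)
  have "fact (Suc K') = (of_nat (Suc K') :: complex) * fact K'" by (simp add: fact_Suc)
  moreover have "(of_nat (Suc K') :: complex) \<noteq> 0" by (simp only: of_nat_eq_0_iff)
  ultimately show ?thesis unfolding K inv_coeff_def by simp
qed

text \<open>The three cases of the recursion satisfied by the coefficients in the index n:
  the term mu = 0, the term mu = n + 1 and the terms in between.\<close>

lemma inv_coeff_step_first: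
  assumes "K \<ge> 2"
  shows "4 * of_nat (Suc n) * of_nat (n + K) * inv_coeff K (Suc n) 0 = - inv_coeff (K + 2) n 0"
proof -
  obtain K' where K: "K = Suc (Suc K')" using assms by (metis add_2_eq_Suc le_Suc_ex)
  define X :: complex where "X = fact (n+K'+1)"
  define Z :: complex where "Z = fact (2*n+K'+3)"
  define F :: complex where "F = fact n"
  have Z: "Z \<noteq> 0" and F: "F \<noteq> 0" unfolding Z_def F_def by simp_all
  have a: "inv_coeff K (Suc n) 0 = (-1)^(Suc n) * of_nat (2*n+K'+3) * X / (Z * (of_nat (Suc n) * F * (4 * 4^n)))"
  proof -
    have e1: "K + 2 * Suc n - 2 * 0 - 1 = 2*n + K' + 3" unfolding K by simp
    have e2: "K + Suc n - 0 - 2 = n + K' + 1" unfolding K by simp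
    have e3: "K + 2 * Suc n - 0 - 1 = 2*n + K' + 3" unfolding K by simp
    have "fact (Suc n) = (of_nat (Suc n) :: complex) * fact n" by (simp add: fact_Suc)
    then show ?thesis unfolding inv_coeff_def e1 e2 e3 X_def Z_def F_def by (simp add: mult_ac)
  qed
  have b: "inv_coeff (K+2) n 0 = (-1)^n * of_nat (2*n+K'+3) * (of_nat (n+K'+2) * X) / (Z * (F * 4^n))"
  proof -
    have f1: "K + 2 + 2 * n - 2 * 0 - 1 = 2*n + K' + 3" unfolding K by simp
    have f2: "K + 2 + n - 0 - 2 = Suc (n + K' + 1)" unfolding K by simp
    have f3: "K + 2 + 2 * n - 0 - 1 = 2*n + K' + 3" unfolding K by simp
    have "fact (Suc (n + K' + 1)) = (of_nat (n+K'+2) :: complex) * fact (n+K'+1)"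
      by (simp add: fact_Suc)
    then show ?thesis unfolding inv_coeff_def f1 f2 f3 X_def Z_def F_def by (simp add: mult_ac)
  qed
  have nk: "n + K = n + K' + 2" unfolding K by simp
  have alg: "4 * sa * pa * ((-1)^Suc n * ca * X / (Z * (sa * F * (4 * 4^n)))) = -((-1)^n*ca*(pa*X)/(Z*(F*4^n)))"
    if "sa \<noteq> 0" for sa pa ca :: complex
    using that Z F by (simp add: field_simps)
  show ?thesis unfolding a b nk by (rule alg) (rule of_nat_neq_0)
qed

lemma inv_coeff_factorial: "\<mu> \<le> n \<Longrightarrow> inv_coeff K n \<mu> = (-1) ^ (n - \<mu>) * of_nat (K + 2 * n - 2 * \<mu> - 1) * fact (K + n - \<mu> - 2) /
   (fact \<mu> * fact (n - \<mu>) * fact (K + 2 * n - \<mu> - 1) * 4 ^ n)"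
  unfolding inv_coeff_def by (simp add: binomial_fact field_simps)

lemma inv_coeff_step_last:
  assumes "K \<ge> 2"
  shows "4 * of_nat (Suc n) * of_nat (n + K) * inv_coeff K (Suc n) (Suc n) = inv_coeff K n n - inv_coeff (K + 2) n (Suc n)"
proof -
  obtain K' where K: "K = Suc (Suc K')" using assms by (metis add_2_eq_Suc le_Suc_ex)
  define X :: complex where "X = fact K'"
  define Y :: complex where "Y = fact (K'+n+1)"
  define F :: complex where "F = fact n"
  have Y: "Y \<noteq> 0" and F: "F \<noteq> 0" unfolding Y_def F_def by (simp_all only: fact_nonzero not_False_eq_True)
  have a: "inv_coeff K (Suc n) (Suc n) = of_nat (K'+1) * X / (of_nat (K'+n+2) * Y * (of_nat (Suc n) * F) * (4 * 4^n))"
  proof -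
    have e1: "K + 2 * Suc n - 2 * Suc n - 1 = K' + 1" unfolding K by simp
    have e2: "K + Suc n - Suc n - 2 = K'" unfolding K by simp
    have e3: "K + 2 * Suc n - Suc n - 1 = Suc (K' + n + 1)" unfolding K by simp
    have "fact (Suc n) = (of_nat (Suc n) :: complex) * fact n" by (simp add: fact_Suc)
    moreover have "fact (Suc (K' + n + 1)) = (of_nat (K'+n+2) :: complex) * fact (K'+n+1)" by (simp add: fact_Suc)
    ultimately show ?thesis unfolding inv_coeff_def e1 e2 e3 X_def Y_def F_def by (simp add: mult_ac)
  qed
  have b: "inv_coeff K n n = of_nat (K'+1) * X / (Y * F * 4^n)"
  proof -
    have e1: "K + 2 * n - 2 * n - 1 = K' + 1" unfolding K by simp
    have e2: "K + n - n - 2 = K'" unfolding K by simp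
    have e3: "K + 2 * n - n - 1 = K' + n + 1" unfolding K by simp
    show ?thesis unfolding inv_coeff_def e1 e2 e3 X_def Y_def F_def by (simp add: mult_ac)
  qed
  have c: "inv_coeff (K + 2) n (Suc n) = 0" by (simp add: inv_coeff_beyond)
  have nk: "n + K = K' + n + 2" unfolding K by simp
  have alg: "4 * sa * pa * (ca * X / (pa * Y * (sa * F) * (4 * 4^n))) = ca * X / (Y * F * 4^n) - 0"
    if "sa \<noteq> 0" "pa \<noteq> 0" for sa pa ca :: complex
    using that Y F by (simp add: field_simps)
  have n1: "(of_nat (Suc n)::complex) \<noteq> 0" by (rule of_nat_neq_0)
  have n2: "(of_nat (K'+n+2)::complex) \<noteq> 0" by (simp only: of_nat_eq_0_iff)
  show ?thesis unfolding a b c nk by (rule alg[OF n1 n2])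
qed

text \<open>The field identity behind the middle terms; a = p + 1, b = q + 1 and c is the
  last factor of the largest factorial.\<close>

lemma inv_coeff_mid_identity:
  fixes a b c d X Y P Q :: complex
  assumes "X \<noteq> 0" "Y \<noteq> 0" "P \<noteq> 0" "Q \<noteq> 0" "a \<noteq> 0" "b \<noteq> 0" "c \<noteq> 0"
  shows "4 * (a + b) * (c - b) * ((-1) ^ (Suc q) * d * X / ((a * P) * (b * Q) * (c * Y) * 4 ^ (p+q+2))) =
     (-1) ^ (Suc q) * d * X / (P * (b * Q) * Y * 4 ^ (p+q+1)) -
     (-1) ^ q * d * ((c - a - b) * X) / ((a * P) * Q * (c * Y) * 4 ^ (p+q+1))"
  using assms by (simp add: field_simps)

lemma inv_coeff_step_mid:
  assumes "K \<ge> 2"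
  shows "4 * of_nat (p + q + 2) * of_nat (p + q + 1 + K) * inv_coeff K (p + q + 2) (Suc p) =
     inv_coeff K (p + q + 1) p - inv_coeff (K + 2) (p + q + 1) (Suc p)"
proof -
  obtain K' where K: "K = Suc (Suc K')" using assms by (metis add_2_eq_Suc le_Suc_ex)
  define X :: complex where "X = fact (K'+q+1)"
  define Y :: complex where "Y = fact (K'+p+2*q+3)"
  define P :: complex where "P = fact p"
  define Q :: complex where "Q = fact q"
  have nz: "X \<noteq> 0" "Y \<noteq> 0" "P \<noteq> 0" "Q \<noteq> 0" unfolding X_def Y_def P_def Q_def by (simp_all only: fact_nonzero not_False_eq_True)
  have fP: "fact (Suc p) = (of_nat p + 1) * P" unfolding P_def by (simp add: fact_Suc)
  have fQ: "fact (Suc q) = (of_nat q + 1) * Q" unfolding Q_def by (simp add: fact_Suc)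
  have fX: "fact (K'+q+2) = (of_nat K' + of_nat q + 2) * X"
  proof -
    have eq: "K'+q+2 = Suc (K'+q+1)" by simp
    show ?thesis by (simp only: eq fact_Suc X_def) simp
  qed
  have fY: "fact (K'+p+2*q+4) = (of_nat K' + of_nat p + 2 * of_nat q + 4) * Y"
  proof -
    have eq: "K'+p+2*q+4 = Suc (K'+p+2*q+3)" by simp
    show ?thesis by (simp only: eq fact_Suc Y_def) simp
  qed
  have a: "inv_coeff K (p + q + 2) (Suc p) = (-1) ^ (Suc q) * of_nat (K'+2*q+3) * X /
       (fact (Suc p) * fact (Suc q) * fact (K'+p+2*q+4) * 4 ^ (p+q+2))"
  proof -
    have e0: "p + q + 2 - Suc p = Suc q" by simp
    have e1: "K + 2 * (p+q+2) - 2 * Suc p - 1 = K' + 2*q + 3" unfolding K by simp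
    have e2: "K + (p+q+2) - Suc p - 2 = K'+q+1" unfolding K by simp
    have e3: "K + 2 * (p+q+2) - Suc p - 1 = K'+p+2*q+4" unfolding K by simp
    have le: "Suc p \<le> p + q + 2" by simp
    show ?thesis by (simp only: inv_coeff_factorial[OF le] e0 e1 e2 e3 X_def)
  qed
  have b: "inv_coeff K (p + q + 1) p = (-1) ^ (Suc q) * of_nat (K'+2*q+3) * X /
       (P * fact (Suc q) * Y * 4 ^ (p+q+1))"
  proof -
    have e0: "p + q + 1 - p = Suc q" by simp
    have e1: "K + 2 * (p+q+1) - 2 * p - 1 = K' + 2*q + 3" unfolding K by simp
    have e2: "K + (p+q+1) - p - 2 = K'+q+1" unfolding K by simp
    have e3: "K + 2 * (p+q+1) - p - 1 = K'+p+2*q+3" unfolding K by simp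
    have le: "p \<le> p + q + 1" by simp
    show ?thesis by (simp only: inv_coeff_factorial[OF le] e0 e1 e2 e3 X_def Y_def P_def)
  qed
  have c: "inv_coeff (K+2) (p + q + 1) (Suc p) = (-1) ^ q * of_nat (K'+2*q+3) * fact (K'+q+2) /
       (fact (Suc p) * Q * fact (K'+p+2*q+4) * 4 ^ (p+q+1))"
  proof -
    have e0: "p + q + 1 - Suc p = q" by simp
    have e1: "K + 2 + 2 * (p+q+1) - 2 * Suc p - 1 = K' + 2*q + 3" unfolding K by simp
    have e2: "K + 2 + (p+q+1) - Suc p - 2 = K'+q+2" unfolding K by simp
    have e3: "K + 2 + 2 * (p+q+1) - Suc p - 1 = K'+p+2*q+4" unfolding K by simp
    have le: "Suc p \<le> p + q + 1" by simp
    show ?thesis by (simp only: inv_coeff_factorial[OF le] e0 e1 e2 e3 Q_def)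
  qed
  have nk: "p + q + 1 + K = K' + p + q + 3" unfolding K by simp
  have n3: "of_nat K' + of_nat p + 2 * of_nat q + 4 \<noteq> (0::complex)"
  proof -
    have "of_nat K' + of_nat p + 2 * of_nat q + 4 = (of_nat (K' + p + 2*q + 4)::complex)" by simp
    also have "\<dots> \<noteq> 0" by (simp only: of_nat_eq_0_iff)
    finally show ?thesis .
  qed
  have n1: "of_nat p + 1 \<noteq> (0::complex)" using of_nat_neq_0[of p] by (simp add: add.commute)
  have n2: "of_nat q + 1 \<noteq> (0::complex)" using of_nat_neq_0[of q] by (simp add: add.commute)
  note A = inv_coeff_mid_identity[OF nz n1 n2 n3, where p = p and q = q and d = "of_nat (K'+2*q+3)"]
  show ?thesis unfolding a b c nk fP fQ fX fY using A by (simp add: algebra_simps)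
qed


lemma inv_coeff_step:
  assumes "K \<ge> 2" "\<mu> \<le> n"
  shows "4 * of_nat (Suc n) * of_nat (n + K) * inv_coeff K (Suc n) (Suc \<mu>) = inv_coeff K n \<mu> - inv_coeff (K + 2) n (Suc \<mu>)"
proof (cases "\<mu> = n")
  case True
  then show ?thesis using inv_coeff_step_last[OF assms(1)] by simp
next
  case False
  then have "\<mu> < n" using assms(2) by simp
  then obtain q where n: "n = \<mu> + q + 1" using less_imp_Suc_add[of \<mu> n] by auto
  have e1: "Suc n = \<mu> + q + 2" using n by simp
  show ?thesis unfolding e1 using inv_coeff_step_mid[OF assms(1), of \<mu> q] unfolding n[symmetric] .
qed

text \<open>The coefficient recursion in summed form: it is exactly what the induction step of
  the ladder inversion needs, for arbitrary values w0 and W.\<close>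

lemma inv_coeff_sum_step:
  fixes A w0 :: complex and W :: "nat \<Rightarrow> complex"
  assumes K: "K \<ge> 2"
  shows "4 * of_nat (Suc n) * of_nat (n + K) *
      (inv_coeff K (Suc n) 0 * w0 + (\<Sum>\<mu>\<le>n. inv_coeff K (Suc n) (Suc \<mu>) * A^(Suc \<mu>) * W \<mu>)) =
    A * (\<Sum>\<mu>\<le>n. inv_coeff K n \<mu> * A^\<mu> * W \<mu>) -
      (inv_coeff (K+2) n 0 * w0 + (\<Sum>\<mu>\<le>n. inv_coeff (K+2) n (Suc \<mu>) * A^(Suc \<mu>) * W \<mu>))"
proof -
  define c :: complex where "c = 4 * of_nat (Suc n) * of_nat (n + K)"
  have "c * (inv_coeff K (Suc n) 0 * w0 + (\<Sum>\<mu>\<le>n. inv_coeff K (Suc n) (Suc \<mu>) * A^(Suc \<mu>) * W \<mu>)) =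
      (c * inv_coeff K (Suc n) 0) * w0 + (\<Sum>\<mu>\<le>n. (c * inv_coeff K (Suc n) (Suc \<mu>)) * A^(Suc \<mu>) * W \<mu>)"
    by (simp add: sum_distrib_left distrib_left mult.assoc)
  also have "\<dots> = - inv_coeff (K+2) n 0 * w0 +
      (\<Sum>\<mu>\<le>n. (inv_coeff K n \<mu> - inv_coeff (K + 2) n (Suc \<mu>)) * A^(Suc \<mu>) * W \<mu>)"
  proof -
    have "c * inv_coeff K (Suc n) 0 = - inv_coeff (K+2) n 0"
      unfolding c_def using inv_coeff_step_first[OF K, of n] .
    moreover have "(\<Sum>\<mu>\<le>n. (c * inv_coeff K (Suc n) (Suc \<mu>)) * A^(Suc \<mu>) * W \<mu>) =
       (\<Sum>\<mu>\<le>n. (inv_coeff K n \<mu> - inv_coeff (K + 2) n (Suc \<mu>)) * A^(Suc \<mu>) * W \<mu>)"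
      by (intro sum.cong refl) (simp only: c_def inv_coeff_step[OF K] atMost_iff)
    ultimately show ?thesis by simp
  qed
  also have "\<dots> = A * (\<Sum>\<mu>\<le>n. inv_coeff K n \<mu> * A^\<mu> * W \<mu>) -
      (inv_coeff (K+2) n 0 * w0 + (\<Sum>\<mu>\<le>n. inv_coeff (K+2) n (Suc \<mu>) * A^(Suc \<mu>) * W \<mu>))"
  proof -
    have "(\<Sum>\<mu>\<le>n. (inv_coeff K n \<mu> - inv_coeff (K + 2) n (Suc \<mu>)) * A^(Suc \<mu>) * W \<mu>) =
      (\<Sum>\<mu>\<le>n. inv_coeff K n \<mu> * A^(Suc \<mu>) * W \<mu>) - (\<Sum>\<mu>\<le>n. inv_coeff (K + 2) n (Suc \<mu>) * A^(Suc \<mu>) * W \<mu>)"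
      by (simp only: sum_subtractf[symmetric] left_diff_distrib)
    moreover have "(\<Sum>\<mu>\<le>n. inv_coeff K n \<mu> * A^(Suc \<mu>) * W \<mu>) = A * (\<Sum>\<mu>\<le>n. inv_coeff K n \<mu> * A^\<mu> * W \<mu>)"
      by (simp add: sum_distrib_left mult_ac)
    ultimately show ?thesis by simp
  qed
  finally show ?thesis unfolding c_def .
qed

lemma ladder_inversion:
  fixes w :: "nat \<Rightarrow> nat \<Rightarrow> nat \<Rightarrow> complex" and A :: complex
  assumes rec: "\<And>j n a. w (Suc j) n a = A * w j n (Suc a) - 4 * of_nat (Suc n) * of_nat (n + k + 2*j) * w j (Suc n) a"
    and k: "k \<ge> 2"
  shows "w j n a = (\<Sum>\<mu>\<le>n. inv_coeff (k + 2*j) n \<mu> * A^\<mu> * w (j + n - \<mu>) 0 (a + \<mu>))"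
proof (induction n arbitrary: j a)
  case 0
  show ?case using inv_coeff_0_0 k by simp
next
  case (Suc n)
  define K where "K = k + 2*j"
  have K2: "K \<ge> 2" using k unfolding K_def by simp
  have K': "k + 2 * Suc j = K + 2" unfolding K_def by simp
  define c :: complex where "c = 4 * of_nat (Suc n) * of_nat (n + K)"
  have cnz: "c \<noteq> 0" unfolding c_def using K2 by (simp only: mult_eq_0_iff of_nat_eq_0_iff) simp
  have rec_jn: "c * w j (Suc n) a = A * w j n (Suc a) - w (Suc j) n a"
  proof -
    have "n + K = n + k + 2 * j" unfolding K_def by simp
    then show ?thesis using rec[of j n a] unfolding c_def by simp
  qed
  define W where "W \<mu> = w (j + n - \<mu>) 0 (Suc a + \<mu>)" for \<mu>
  have IH1: "w j n (Suc a) = (\<Sum>\<mu>\<le>n. inv_coeff K n \<mu> * A^\<mu> * W \<mu>)"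
    using Suc.IH[of j "Suc a"] unfolding K_def W_def by simp
  have IH2: "w (Suc j) n a = inv_coeff (K+2) n 0 * w (Suc j + n) 0 a +
      (\<Sum>\<mu>\<le>n. inv_coeff (K+2) n (Suc \<mu>) * A^(Suc \<mu>) * W \<mu>)"
  proof -
    have "w (Suc j) n a = (\<Sum>\<mu>\<le>Suc n. inv_coeff (K+2) n \<mu> * A^\<mu> * w (Suc j + n - \<mu>) 0 (a + \<mu>))"
      using Suc.IH[of "Suc j" a] inv_coeff_beyond[of n "Suc n" "K+2"] unfolding K' by simp
    also have "\<dots> = inv_coeff (K+2) n 0 * w (Suc j + n) 0 a +
      (\<Sum>\<mu>\<le>n. inv_coeff (K+2) n (Suc \<mu>) * A^(Suc \<mu>) * W \<mu>)"
      unfolding sum.atMost_Suc_shift W_def by simp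
    finally show ?thesis .
  qed
  have goal: "(\<Sum>\<mu>\<le>Suc n. inv_coeff K (Suc n) \<mu> * A^\<mu> * w (j + Suc n - \<mu>) 0 (a + \<mu>)) =
      inv_coeff K (Suc n) 0 * w (Suc j + n) 0 a +
      (\<Sum>\<mu>\<le>n. inv_coeff K (Suc n) (Suc \<mu>) * A^(Suc \<mu>) * W \<mu>)"
    unfolding sum.atMost_Suc_shift W_def by simp
  have "c * (\<Sum>\<mu>\<le>Suc n. inv_coeff K (Suc n) \<mu> * A^\<mu> * w (j + Suc n - \<mu>) 0 (a + \<mu>)) =
      A * w j n (Suc a) - w (Suc j) n a"
    unfolding goal IH1 IH2 c_def by (rule inv_coeff_sum_step[OF K2])
  also have "\<dots> = c * w j (Suc n) a" by (rule rec_jn[symmetric])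
  finally show ?case using cnz unfolding K_def by simp
qed

section \<open>q-series with rapidly decaying coefficients\<close>

lemma open_upper_half_plane: "open {s. Im s > 0}"
  using open_halfspace_Im_gt[of 0] by simp

text \<open>Open neighbourhoods needed to compare derivatives of functions that agree locally.\<close>

lemma eventually_upper_half: "Im s > 0 \<Longrightarrow> eventually (\<lambda>w. Im w > 0) (nhds s)"
  using eventually_nhds_in_open[OF open_upper_half_plane, of s] by simp

lemma eventually_nonzero: "(z::complex) \<noteq> 0 \<Longrightarrow> eventually (\<lambda>w. w \<noteq> 0) (nhds z)"
  using eventually_nhds_in_open[of "-{0}" z] by (simp add: open_Compl)

definition qseries :: "(nat \<Rightarrow> complex) \<Rightarrow> complex \<Rightarrow> complex" where
  "qseries b s = (\<Sum>N. b N * ee (of_nat N * s))"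

text \<open>Rapid decay of the coefficients: sum_N N^a e^(-2 pi N y) |b N| converges for every
  exponent a and every y > 0.  This makes the q-series holomorphic with termwise derivatives.\<close>

definition rapid_decay :: "(nat \<Rightarrow> complex) \<Rightarrow> bool" where
  "rapid_decay b \<longleftrightarrow> (\<forall>y>0. \<forall>a. summable (\<lambda>N. real N ^ a * exp (-2*pi*real N*y) * norm (b N)))"

lemma norm_ee: "norm (ee z) = exp (-2*pi*Im z)"
  unfolding ee_def by simp

lemma rapid_decayD: "rapid_decay b \<Longrightarrow> y > 0 \<Longrightarrow> summable (\<lambda>N. real N ^ a * exp (-2*pi*real N*y) * norm (b N))"
  unfolding rapid_decay_def by blast

lemma qseries_abs_summable:
  assumes "rapid_decay b" "Im s > 0"
  shows "summable (\<lambda>N. norm (b N * ee (of_nat N * s)))"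
proof -
  have "norm (b N * ee (of_nat N * s)) = real N ^ 0 * exp (-2*pi*real N*Im s) * norm (b N)" for N
    by (simp add: norm_mult norm_ee mult.commute)
  then show ?thesis using rapid_decayD[OF assms, of 0] by simp
qed

lemma qseries_summable:
  assumes "rapid_decay b" "Im s > 0"
  shows "summable (\<lambda>N. b N * ee (of_nat N * s))"
  by (rule summable_norm_cancel[OF qseries_abs_summable[OF assms]])

lemma qseries_linear3:
  assumes "rapid_decay b1" "rapid_decay b2" "rapid_decay b3" "Im s > 0"
  shows "qseries (\<lambda>N. c1 * b1 N + c2 * b2 N + c3 * b3 N) s = c1 * qseries b1 s + c2 * qseries b2 s + c3 * qseries b3 s"
proof -
  have s: "summable (\<lambda>N. b1 N * ee (of_nat N * s))" "summable (\<lambda>N. b2 N * ee (of_nat N * s))" "summable (\<lambda>N. b3 N * ee (of_nat N * s))"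
    using assms by (auto intro: qseries_summable)
  have "qseries (\<lambda>N. c1 * b1 N + c2 * b2 N + c3 * b3 N) s =
     (\<Sum>N. c1 * (b1 N * ee (of_nat N * s)) + c2 * (b2 N * ee (of_nat N * s)) + c3 * (b3 N * ee (of_nat N * s)))"
    unfolding qseries_def by (simp add: algebra_simps)
  also have "\<dots> = (\<Sum>N. c1 * (b1 N * ee (of_nat N * s)) + c2 * (b2 N * ee (of_nat N * s))) + (\<Sum>N. c3 * (b3 N * ee (of_nat N * s)))"
    by (intro suminf_add[symmetric] summable_add summable_mult s)
  also have "(\<Sum>N. c1 * (b1 N * ee (of_nat N * s)) + c2 * (b2 N * ee (of_nat N * s))) = (\<Sum>N. c1 * (b1 N * ee (of_nat N * s))) + (\<Sum>N. c2 * (b2 N * ee (of_nat N * s)))"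
    by (intro suminf_add[symmetric] summable_add summable_mult s)
  finally show ?thesis unfolding qseries_def by (simp add: suminf_mult s)
qed

text \<open>Differentiation multiplies the N-th coefficient by 2 pi i N; rapid decay is preserved.\<close>

lemma rapid_decay_mult_pow:
  assumes "rapid_decay b"
  shows "rapid_decay (\<lambda>N. (2*pi*\<i> * of_nat N)^p * b N)"
  unfolding rapid_decay_def
proof (intro allI impI)
  fix y :: real and a assume y: "y > 0"
  have "summable (\<lambda>N. (2*pi)^p * (real N ^ (a+p) * exp (-2*pi*real N*y) * norm (b N)))"
    using rapid_decayD[OF assms y, of "a+p"] by (rule summable_mult)
  then show "summable (\<lambda>N. real N ^ a * exp (-2*pi*real N*y) * norm ((2*pi*\<i> * of_nat N)^p * b N))"
    by (simp add: norm_mult norm_power power_add power_mult_distrib mult_ac)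
qed

lemma ee_mult_deriv: "((\<lambda>x. ee (of_nat N * x)) has_field_derivative (2*pi*\<i> * of_nat N) * ee (of_nat N * x)) (at x)"
  unfolding ee_def by (auto intro!: derivative_eq_intros simp: mult_ac)

text \<open>Termwise differentiation of a q-series (Weierstrass M-test on a disc in the upper half plane).\<close>

lemma qseries_deriv:
  assumes "rapid_decay b" "Im s > 0"
  shows "(qseries b has_field_derivative qseries (\<lambda>N. (2*pi*\<i> * of_nat N) * b N) s) (at s)"
proof -
  define S where "S = ball s (Im s / 2)"
  have bnd: "Im x > Im s / 2" if "x \<in> S" for x
  proof -
    have "\<bar>Im x - Im s\<bar> \<le> norm (x - s)" using abs_Im_le_cmod[of "x - s"] by simp
    also have "\<dots> < Im s / 2" using that unfolding S_def by (metis dist_commute dist_norm mem_ball)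
    finally show ?thesis by linarith
  qed
  have M: "summable (\<lambda>N. (2*pi) * (real N ^ 1 * exp (-2*pi*real N*(Im s/2)) * norm (b N)))"
    using rapid_decayD[OF assms(1), of "Im s / 2" 1] assms(2) by (intro summable_mult) simp
  have sm: "summable (\<lambda>n. b n * ee (of_nat n * s))" using qseries_summable[OF assms] .
  have cv: "convex S" unfolding S_def by simp
  have sS: "s \<in> S" "s \<in> interior S" unfolding S_def using assms(2) by auto
  have dv: "((\<lambda>x. b n * ee (of_nat n * x)) has_field_derivative (2 * pi * \<i> * of_nat n * b n) * ee (of_nat n * x)) (at x within S)" for n x
    using DERIV_cmult[OF ee_mult_deriv[of n x], of "b n"] by (simp add: has_field_derivative_at_within mult.assoc mult.left_commute)
  have uc: "uniformly_convergent_on S (\<lambda>n x. \<Sum>i<n. (2 * pi * \<i> * of_nat i * b i) * ee (of_nat i * x))"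
  proof (rule Weierstrass_m_test'[OF _ M])
    fix n x assume x: "x \<in> S"
    have "exp (-2*pi*real n*Im x) \<le> exp (-2*pi*real n*(Im s / 2))"
    proof -
      have "real n * Im s \<le> real n * (2 * Im x)" using bnd[OF x] by (intro mult_left_mono) auto
      then show ?thesis by (intro exp_mono) (simp add: algebra_simps)
    qed
    then show "norm ((2 * pi * \<i> * of_nat n * b n) * ee (of_nat n * x)) \<le> 2 * pi * (real n ^ 1 * exp (- 2 * pi * real n * (Im s / 2)) * norm (b n))"
    proof -
      have "norm ((2 * pi * \<i> * of_nat n * b n) * ee (of_nat n * x)) = 2 * pi * (real n * (exp (-2*pi*real n*Im x) * norm (b n)))"
        by (simp add: norm_mult norm_ee mult.commute mult.left_commute)
      also have "\<dots> \<le> 2 * pi * (real n * (exp (-2*pi*real n*(Im s / 2)) * norm (b n)))"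
        using \<open>exp _ \<le> _\<close> by (intro mult_left_mono) (simp_all add: mult_right_mono)
      finally show ?thesis by (simp add: mult.assoc)
    qed
  qed
  have "((\<lambda>x. \<Sum>n. b n * ee (of_nat n * x)) has_field_derivative (\<Sum>n. (2 * pi * \<i> * of_nat n * b n) * ee (of_nat n * s))) (at s)"
    by (rule has_field_derivative_series'(2)[OF cv dv uc sS(1) sm sS(2)])
  then show ?thesis unfolding qseries_def[abs_def] by simp
qed


lemma qseries_higher_deriv:
  assumes "rapid_decay b"
  shows "Im s > 0 \<Longrightarrow> (deriv ^^ p) (qseries b) s = qseries (\<lambda>N. (2 * pi * \<i> * of_nat N)^p * b N) s"
proof (induction p arbitrary: s)
  case 0
  show ?case by simp
next
  case (Suc p)
  have ev: "eventually (\<lambda>x. (deriv ^^ p) (qseries b) x = qseries (\<lambda>N. (2 * pi * \<i> * of_nat N)^p * b N) x) (nhds s)"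
    using eventually_upper_half[OF Suc.prems] by (rule eventually_mono) (simp add: Suc.IH)
  have "(deriv ^^ Suc p) (qseries b) s = deriv ((deriv ^^ p) (qseries b)) s" by simp
  also have "\<dots> = deriv (qseries (\<lambda>N. (2 * pi * \<i> * of_nat N)^p * b N)) s" by (rule deriv_cong_ev[OF ev refl])
  also have "\<dots> = qseries (\<lambda>N. (2 * pi * \<i> * of_nat N) * ((2 * pi * \<i> * of_nat N)^p * b N)) s"
    by (rule DERIV_imp_deriv[OF qseries_deriv[OF rapid_decay_mult_pow[OF assms] Suc.prems]])
  also have "\<dots> = qseries (\<lambda>N. (2 * pi * \<i> * of_nat N)^Suc p * b N) s" by (simp add: mult.assoc)
  finally show ?case .
qed

section \<open>Admissible coefficient arrays and the series H\<close>

text \<open>The diagonal part of a Jacobi form,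
  and all its images under tilde D, are of the form H_beta(tau, z1 z2).\<close>

definition pseries :: "(nat \<Rightarrow> nat \<Rightarrow> complex) \<Rightarrow> nat \<Rightarrow> complex \<Rightarrow> complex" where
  "pseries \<beta> N x = (\<Sum>n. \<beta> N n * x ^ n)"

definition jseries :: "(nat \<Rightarrow> nat \<Rightarrow> complex) \<Rightarrow> complex \<Rightarrow> complex \<Rightarrow> complex" where
  "jseries \<beta> s x = qseries (\<lambda>N. pseries \<beta> N x) s"

definition majorant :: "(nat \<Rightarrow> nat \<Rightarrow> complex) \<Rightarrow> nat \<Rightarrow> real \<Rightarrow> real" where
  "majorant \<beta> N R = (\<Sum>n. norm (\<beta> N n) * R ^ n)"

text \<open>Admissibility: every row has infinite radius of convergence, and the row majorants
  decay rapidly in N.  This justifies all the termwise differentiations below.\<close>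

definition admissible :: "(nat \<Rightarrow> nat \<Rightarrow> complex) \<Rightarrow> bool" where
  "admissible \<beta> \<longleftrightarrow> (\<forall>N. \<forall>R\<ge>0. summable (\<lambda>n. norm (\<beta> N n) * R ^ n)) \<and>
     (\<forall>y>0. \<forall>R\<ge>0. \<forall>a. summable (\<lambda>N. real N ^ a * exp (-2*pi*real N*y) * majorant \<beta> N R))"

lemma admissible_radius: "admissible \<beta> \<Longrightarrow> R \<ge> 0 \<Longrightarrow> summable (\<lambda>n. norm (\<beta> N n) * R ^ n)"
  unfolding admissible_def by blast

lemma admissible_decay: "admissible \<beta> \<Longrightarrow> y > 0 \<Longrightarrow> R \<ge> 0 \<Longrightarrow> summable (\<lambda>N. real N ^ a * exp (-2*pi*real N*y) * majorant \<beta> N R)"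
  unfolding admissible_def by blast

lemma majorant_nonneg: "admissible \<beta> \<Longrightarrow> R \<ge> 0 \<Longrightarrow> majorant \<beta> N R \<ge> 0"
  unfolding majorant_def by (intro suminf_nonneg admissible_radius) auto

lemma majorant_mono: "admissible \<beta> \<Longrightarrow> 0 \<le> R \<Longrightarrow> R \<le> R' \<Longrightarrow> majorant \<beta> N R \<le> majorant \<beta> N R'"
  unfolding majorant_def
  by (intro suminf_le admissible_radius[of \<beta>] mult_left_mono power_mono) auto

lemma pseries_abs_summable: "admissible \<beta> \<Longrightarrow> summable (\<lambda>n. norm (\<beta> N n * x ^ n))"
  using admissible_radius[of \<beta> "norm x" N] by (simp add: norm_mult norm_power)

lemma pseries_summable: "admissible \<beta> \<Longrightarrow> summable (\<lambda>n. \<beta> N n * x ^ n)"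
  by (rule summable_norm_cancel[OF pseries_abs_summable])

lemma pseries_linear3:
  assumes "admissible \<beta>1" "admissible \<beta>2" "admissible \<beta>3"
  shows "pseries (\<lambda>N n. c1 * \<beta>1 N n + c2 * \<beta>2 N n + c3 * \<beta>3 N n) N x = c1 * pseries \<beta>1 N x + c2 * pseries \<beta>2 N x + c3 * pseries \<beta>3 N x"
proof -
  have s: "summable (\<lambda>n. \<beta>1 N n * x^n)" "summable (\<lambda>n. \<beta>2 N n * x^n)" "summable (\<lambda>n. \<beta>3 N n * x^n)"
    using assms by (auto intro: pseries_summable)
  have "pseries (\<lambda>N n. c1 * \<beta>1 N n + c2 * \<beta>2 N n + c3 * \<beta>3 N n) N x =
     (\<Sum>n. c1 * (\<beta>1 N n * x^n) + c2 * (\<beta>2 N n * x^n) + c3 * (\<beta>3 N n * x^n))"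
    unfolding pseries_def by (simp add: algebra_simps)
  also have "\<dots> = (\<Sum>n. c1 * (\<beta>1 N n * x^n) + c2 * (\<beta>2 N n * x^n)) + (\<Sum>n. c3 * (\<beta>3 N n * x^n))"
    by (intro suminf_add[symmetric] summable_add summable_mult s)
  also have "(\<Sum>n. c1 * (\<beta>1 N n * x^n) + c2 * (\<beta>2 N n * x^n)) = (\<Sum>n. c1 * (\<beta>1 N n * x^n)) + (\<Sum>n. c2 * (\<beta>2 N n * x^n))"
    by (intro suminf_add[symmetric] summable_add summable_mult s)
  finally show ?thesis unfolding pseries_def by (simp add: suminf_mult s)
qed

lemma pseries_norm_le: "admissible \<beta> \<Longrightarrow> norm (pseries \<beta> N x) \<le> majorant \<beta> N (norm x)"
  unfolding pseries_def majorant_def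
  using summable_norm[OF pseries_abs_summable, of \<beta> N x] by (simp add: norm_mult norm_power)

lemma admissible_pseries_rapid_decay: 
  assumes "admissible \<beta>" shows "rapid_decay (\<lambda>N. pseries \<beta> N x)"
  unfolding rapid_decay_def
proof (intro allI impI)
  fix y :: real and a assume y: "y > 0"
  show "summable (\<lambda>N. real N ^ a * exp (- 2 * pi * real N * y) * norm (pseries \<beta> N x))"
  proof (rule summable_comparison_test'[OF admissible_decay[OF assms y, of "norm x" a]])
    fix N :: nat
    show "norm (real N ^ a * exp (- 2 * pi * real N * y) * norm (pseries \<beta> N x)) \<le>
        real N ^ a * exp (- 2 * pi * real N * y) * majorant \<beta> N (norm x)"
      using pseries_norm_le[OF assms, of N x] by (simp add: mult_left_mono)
  qed simp
qed

lemma coeff_le_majorant: "admissible \<beta> \<Longrightarrow> norm (\<beta> N n) \<le> majorant \<beta> N 1"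
  unfolding majorant_def using sum_le_suminf[OF admissible_radius[of \<beta> 1 N], of "{n}"] by simp

lemma admissible_coeff_rapid_decay:
  assumes "admissible \<beta>" shows "rapid_decay (\<lambda>N. \<beta> N n)"
  unfolding rapid_decay_def
proof (intro allI impI)
  fix y :: real and a assume y: "y > 0"
  show "summable (\<lambda>N. real N ^ a * exp (- 2 * pi * real N * y) * norm (\<beta> N n))"
  proof (rule summable_comparison_test'[OF admissible_decay[OF assms y, of 1 a]])
    fix N :: nat
    show "norm (real N ^ a * exp (- 2 * pi * real N * y) * norm (\<beta> N n)) \<le>
        real N ^ a * exp (- 2 * pi * real N * y) * majorant \<beta> N 1"
      using coeff_le_majorant[OF assms, of N n] by (simp add: mult_left_mono)
  qed simp
qed

text \<open>The polynomial factor (n+1)^2 coming from two x-derivatives is absorbed by enlarging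
  the radius from R to 4R + 4.\<close>

lemma square_le_pow4: "(Suc n)^2 \<le> 4^n"
proof (induction n)
  case 0 then show ?case by simp
next
  case (Suc n)
  have "(Suc (Suc n))^2 \<le> 4 * (Suc n)^2" by (simp add: power2_eq_square)
  also have "\<dots> \<le> 4 * 4^n" using Suc by simp
  finally show ?case by simp
qed

lemma square_pow_le_pow:
  assumes "R \<ge> 0"
  shows "real (Suc n)^2 * R^n \<le> (4*R+4)^(Suc n)"
proof -
  have "real (Suc n)^2 \<le> 4^n" using square_le_pow4[of n] by (metis of_nat_le_iff of_nat_numeral of_nat_power)
  moreover have "R^n \<le> (R+1)^n" using assms by (intro power_mono) auto
  ultimately have "real (Suc n)^2 * R^n \<le> 4^n * (R+1)^n"
    using assms by (intro mult_mono) auto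
  also have "\<dots> = (4*R+4)^n" by (simp add: power_mult_distrib[symmetric] algebra_simps)
  also have "\<dots> \<le> (4*R+4)^(Suc n)" using assms by (intro power_increasing) auto
  finally show ?thesis .
qed

text \<open>Domination principle: an array bounded by c1 N |beta(N,n)| + c2 (n+1)^2 |beta(N,n+1)|
  for an admissible beta is again admissible.  All derived arrays below (derivatives in
  s and x, the image under L) are handled this way.\<close>

lemma majorant_dominated:
  assumes g: "admissible \<beta>" and c: "c1 \<ge> 0" "c2 \<ge> 0" and R: "R \<ge> 0"
    and le: "\<And>n. norm (\<gamma> N n) \<le> c1 * real N * norm (\<beta> N n) + c2 * real (Suc n)^2 * norm (\<beta> N (Suc n))"
  shows "summable (\<lambda>n. norm (\<gamma> N n) * R ^ n)"
    and "majorant \<gamma> N R \<le> c1 * real N * majorant \<beta> N R + c2 * majorant \<beta> N (4*R+4)"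
proof -
  define Q where "Q = 4*R+4"
  have Q: "Q \<ge> 0" unfolding Q_def using R by simp
  have bnd: "norm (\<gamma> N n) * R ^ n \<le> c1 * real N * (norm (\<beta> N n) * R^n) + c2 * (norm (\<beta> N (Suc n)) * Q^(Suc n))" for n
  proof -
    have "norm (\<gamma> N n) * R ^ n \<le> (c1 * real N * norm (\<beta> N n) + c2 * real (Suc n)^2 * norm (\<beta> N (Suc n))) * R^n"
      using le[of n] R by (intro mult_right_mono) auto
    also have "\<dots> = c1 * real N * (norm (\<beta> N n) * R^n) + c2 * norm (\<beta> N (Suc n)) * (real (Suc n)^2 * R^n)"
      by (simp add: algebra_simps)
    also have "\<dots> \<le> c1 * real N * (norm (\<beta> N n) * R^n) + c2 * norm (\<beta> N (Suc n)) * Q^(Suc n)"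
      using square_pow_le_pow[OF R, of n] c unfolding Q_def by (intro add_left_mono mult_left_mono) auto
    finally show ?thesis by (simp add: mult.assoc)
  qed
  have s1: "summable (\<lambda>n. norm (\<beta> N n) * R^n)" using admissible_radius[OF g R] .
  have sQ: "summable (\<lambda>n. norm (\<beta> N n) * Q^n)" using admissible_radius[OF g Q] .
  have s2: "summable (\<lambda>n. norm (\<beta> N (Suc n)) * Q^(Suc n))"
    using sQ by (subst summable_Suc_iff)
  have sR: "summable (\<lambda>n. c1 * real N * (norm (\<beta> N n) * R^n) + c2 * (norm (\<beta> N (Suc n)) * Q^(Suc n)))"
    by (intro summable_add summable_mult s1 s2)
  show sg: "summable (\<lambda>n. norm (\<gamma> N n) * R ^ n)"
    by (rule summable_comparison_test'[OF sR]) (use bnd R in auto)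
  have "majorant \<gamma> N R \<le> (\<Sum>n. c1 * real N * (norm (\<beta> N n) * R^n) + c2 * (norm (\<beta> N (Suc n)) * Q^(Suc n)))"
    unfolding majorant_def by (intro suminf_le sg sR bnd)
  also have "\<dots> = c1 * real N * majorant \<beta> N R + c2 * (\<Sum>n. norm (\<beta> N (Suc n)) * Q^(Suc n))"
  proof -
    have "(\<Sum>n. c1 * real N * (norm (\<beta> N n) * R^n) + c2 * (norm (\<beta> N (Suc n)) * Q^(Suc n))) =
       (\<Sum>n. c1 * real N * (norm (\<beta> N n) * R^n)) + (\<Sum>n. c2 * (norm (\<beta> N (Suc n)) * Q^(Suc n)))"
      by (rule suminf_add[symmetric]) (intro summable_mult s1 s2)+
    then show ?thesis unfolding majorant_def by (simp only: suminf_mult[OF s1] suminf_mult[OF s2])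
  qed
  also have "\<dots> \<le> c1 * real N * majorant \<beta> N R + c2 * majorant \<beta> N Q"
  proof -
    have "(\<Sum>n. norm (\<beta> N (Suc n)) * Q^(Suc n)) \<le> majorant \<beta> N Q"
      unfolding majorant_def using suminf_split_head[OF sQ] Q by simp
    then show ?thesis using c by (intro add_left_mono mult_left_mono) auto
  qed
  finally show "majorant \<gamma> N R \<le> c1 * real N * majorant \<beta> N R + c2 * majorant \<beta> N (4*R+4)"
    unfolding Q_def .
qed

lemma admissible_dominated:
  assumes g: "admissible \<beta>" and c: "c1 \<ge> 0" "c2 \<ge> 0"
    and le: "\<And>N n. norm (\<gamma> N n) \<le> c1 * real N * norm (\<beta> N n) + c2 * real (Suc n)^2 * norm (\<beta> N (Suc n))"
  shows "admissible \<gamma>"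
  unfolding admissible_def
proof (intro conjI allI impI)
  fix N and R :: real assume R: "R \<ge> 0"
  show "summable (\<lambda>n. norm (\<gamma> N n) * R ^ n)" by (rule majorant_dominated(1)[where \<gamma>=\<gamma> and N=N, OF g c R le[of N]])
next
  fix y R :: real and a assume y: "y > 0" and R: "R \<ge> 0"
  have s: "summable (\<lambda>N. c1 * (real N ^ Suc a * exp (-2*pi*real N*y) * majorant \<beta> N R)
      + c2 * (real N ^ a * exp (-2*pi*real N*y) * majorant \<beta> N (4*R+4)))"
    using R by (intro summable_add summable_mult admissible_decay[OF g y]) auto
  show "summable (\<lambda>N. real N ^ a * exp (-2*pi*real N*y) * majorant \<gamma> N R)"
  proof (rule summable_comparison_test'[OF s])
    fix N :: nat
    have nn: "0 \<le> majorant \<gamma> N R"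
      unfolding majorant_def using majorant_dominated(1)[where \<gamma>=\<gamma> and N=N, OF g c R le[of N]] R by (intro suminf_nonneg) auto
    have "real N ^ a * exp (-2*pi*real N*y) * majorant \<gamma> N R
        \<le> real N ^ a * exp (-2*pi*real N*y) * (c1 * real N * majorant \<beta> N R + c2 * majorant \<beta> N (4*R+4))"
      using majorant_dominated(2)[where \<gamma>=\<gamma> and N=N, OF g c R le[of N]] by (intro mult_left_mono) auto
    also have "\<dots> = c1 * (real N ^ Suc a * exp (-2*pi*real N*y) * majorant \<beta> N R)
        + c2 * (real N ^ a * exp (-2*pi*real N*y) * majorant \<beta> N (4*R+4))"
      by (simp add: algebra_simps)
    finally show "norm (real N ^ a * exp (-2*pi*real N*y) * majorant \<gamma> N R) \<le> \<dots>" using nn by simp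
  qed
qed

definition x_deriv_coeffs :: "(nat \<Rightarrow> nat \<Rightarrow> complex) \<Rightarrow> nat \<Rightarrow> nat \<Rightarrow> complex" where
  "x_deriv_coeffs \<beta> N n = of_nat (Suc n) * \<beta> N (Suc n)"

definition tau_deriv_coeffs :: "(nat \<Rightarrow> nat \<Rightarrow> complex) \<Rightarrow> nat \<Rightarrow> nat \<Rightarrow> complex" where
  "tau_deriv_coeffs \<beta> N n = 2 * pi * \<i> * of_nat N * \<beta> N n"

lemma admissible_x_deriv: "admissible \<beta> \<Longrightarrow> admissible (x_deriv_coeffs \<beta>)"
proof (rule admissible_dominated[of \<beta> 0 1])
  fix N n
  have "real (Suc n) \<le> real (Suc n)^2" by (simp add: power2_eq_square)
  then show "norm (x_deriv_coeffs \<beta> N n) \<le> 0 * real N * norm (\<beta> N n) + 1 * real (Suc n)^2 * norm (\<beta> N (Suc n))"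
    unfolding x_deriv_coeffs_def by (simp add: norm_mult mult_right_mono del: of_nat_Suc)
qed auto

lemma admissible_tau_deriv: "admissible \<beta> \<Longrightarrow> admissible (tau_deriv_coeffs \<beta>)"
proof (rule admissible_dominated[of \<beta> "2*pi" 0])
  fix N n
  show "norm (tau_deriv_coeffs \<beta> N n) \<le> 2*pi * real N * norm (\<beta> N n) + 0 * real (Suc n)^2 * norm (\<beta> N (Suc n))"
    unfolding tau_deriv_coeffs_def by (simp add: norm_mult)
qed auto

lemma pseries_deriv: "admissible \<beta> \<Longrightarrow> (pseries \<beta> N has_field_derivative pseries (x_deriv_coeffs \<beta>) N x) (at x)"
proof -
  assume g: "admissible \<beta>"
  have "((\<lambda>x. \<Sum>n. \<beta> N n * x^n) has_field_derivative (\<Sum>n. diffs (\<beta> N) n * x^n)) (at x)"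
    by (rule termdiffs_strong_converges_everywhere) (rule pseries_summable[OF g])
  then show ?thesis unfolding pseries_def[abs_def] x_deriv_coeffs_def diffs_def by simp
qed

text \<open>Multiplying row N by 2 pi i N corresponds to differentiating e(N s).\<close>

lemma pseries_tau_coeffs: "admissible \<beta> \<Longrightarrow> pseries (tau_deriv_coeffs \<beta>) N x = 2 * pi * \<i> * of_nat N * pseries \<beta> N x"
proof -
  assume g: "admissible \<beta>"
  have "summable (\<lambda>n. \<beta> N n * x ^ n)" by (rule pseries_summable[OF g])
  from suminf_mult[OF this, of "2 * pi * \<i> * of_nat N"]
  show ?thesis unfolding pseries_def tau_deriv_coeffs_def by (simp add: mult.assoc)
qed

lemma jseries_deriv_tau:
  assumes "admissible \<beta>" "Im s > 0"
  shows "((\<lambda>s. jseries \<beta> s x) has_field_derivative jseries (tau_deriv_coeffs \<beta>) s x) (at s)"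
proof -
  have "(qseries (\<lambda>N. pseries \<beta> N x) has_field_derivative qseries (\<lambda>N. 2 * pi * \<i> * of_nat N * pseries \<beta> N x) s) (at s)"
    by (rule qseries_deriv[OF admissible_pseries_rapid_decay[OF assms(1)] assms(2)])
  then show ?thesis unfolding jseries_def[abs_def] pseries_tau_coeffs[OF assms(1)] by simp
qed

text \<open>Derivative of H_beta in x: termwise, using uniform convergence on a disc around x.\<close>

lemma jseries_deriv_x:
  assumes g: "admissible \<beta>" and s: "Im s > 0"
  shows "((\<lambda>x. jseries \<beta> s x) has_field_derivative jseries (x_deriv_coeffs \<beta>) s x) (at x)"
proof -
  define S where "S = ball x 1"
  have cv: "convex S" unfolding S_def by simp
  have xS: "x \<in> S" "x \<in> interior S" unfolding S_def by auto
  have dv: "((\<lambda>z. pseries \<beta> N z * ee (of_nat N * s)) has_field_derivative pseries (x_deriv_coeffs \<beta>) N z * ee (of_nat N * s)) (at z within S)" for N z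
    using DERIV_cmult_right[OF pseries_deriv[OF g, of N z], of "ee (of_nat N * s)"] by (simp add: has_field_derivative_at_within)
  have gx: "admissible (x_deriv_coeffs \<beta>)" using admissible_x_deriv[OF g] .
  have M: "summable (\<lambda>N. real N ^ 0 * exp (-2*pi*real N*Im s) * majorant (x_deriv_coeffs \<beta>) N (norm x + 1))"
    by (rule admissible_decay[OF gx s]) simp
  have uc: "uniformly_convergent_on S (\<lambda>n z. \<Sum>i<n. pseries (x_deriv_coeffs \<beta>) i z * ee (of_nat i * s))"
  proof (rule Weierstrass_m_test'[OF _ M])
    fix N z assume z: "z \<in> S"
    have nz: "norm z \<le> norm x + 1"
    proof -
      have "dist x z < 1" using z unfolding S_def by simp
      moreover have "norm z \<le> norm x + norm (x - z)" using norm_triangle_ineq4[of x "x - z"] by simp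
      ultimately show ?thesis by (simp add: dist_norm)
    qed
    have "norm (pseries (x_deriv_coeffs \<beta>) N z * ee (of_nat N * s)) = norm (pseries (x_deriv_coeffs \<beta>) N z) * exp (-2*pi*real N*Im s)"
      by (simp add: norm_mult norm_ee)
    also have "\<dots> \<le> majorant (x_deriv_coeffs \<beta>) N (norm x + 1) * exp (-2*pi*real N*Im s)"
      using pseries_norm_le[OF gx, of N z] majorant_mono[OF gx _ nz, of N] by (intro mult_right_mono) auto
    finally show "norm (pseries (x_deriv_coeffs \<beta>) N z * ee (of_nat N * s)) \<le> real N ^ 0 * exp (-2*pi*real N*Im s) * majorant (x_deriv_coeffs \<beta>) N (norm x + 1)"
      by (simp add: mult.commute)
  qed
  have sm: "summable (\<lambda>N. pseries \<beta> N x * ee (of_nat N * s))" by (rule qseries_summable[OF admissible_pseries_rapid_decay[OF g] s])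
  have "((\<lambda>z. \<Sum>N. pseries \<beta> N z * ee (of_nat N * s)) has_field_derivative (\<Sum>N. pseries (x_deriv_coeffs \<beta>) N x * ee (of_nat N * s))) (at x)"
    by (rule has_field_derivative_series'(2)[OF cv dv uc xS(1) sm xS(2)])
  then show ?thesis unfolding jseries_def qseries_def by simp
qed

lemma jseries_at_0: "jseries \<beta> s 0 = qseries (\<lambda>N. \<beta> N 0) s"
  unfolding jseries_def pseries_def by simp

text \<open>On H_beta(s, z1 z2) the operator
  L_{K,m} = 8 pi i m d_s - (2K-2)/z1 d_{z2} - (2K-2)/z2 d_{z1} - 4 d_{z1} d_{z2}
  becomes 8 pi i m d_s - 4K d_x - 4 x d_x^2 in the variable x = z1 z2; the Euler operator
  x d_x^2 has the coefficient array euler_coeffs.\<close>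

definition euler_coeffs :: "(nat \<Rightarrow> nat \<Rightarrow> complex) \<Rightarrow> nat \<Rightarrow> nat \<Rightarrow> complex" where
  "euler_coeffs \<beta> N n = of_nat n * x_deriv_coeffs \<beta> N n"

definition L_coeffs :: "nat \<Rightarrow> nat \<Rightarrow> (nat \<Rightarrow> nat \<Rightarrow> complex) \<Rightarrow> nat \<Rightarrow> nat \<Rightarrow> complex" where
  "L_coeffs m K \<beta> N n = 8 * pi * \<i> * of_nat m * tau_deriv_coeffs \<beta> N n + (- 4 * of_nat K) * x_deriv_coeffs \<beta> N n + (-4) * euler_coeffs \<beta> N n"

lemma L_coeffs_eq: "L_coeffs m K \<beta> N n = 8 * pi * \<i> * of_nat m * (2 * pi * \<i> * of_nat N * \<beta> N n)
     - 4 * of_nat (Suc n) * of_nat (n + K) * \<beta> N (Suc n)"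
  unfolding L_coeffs_def tau_deriv_coeffs_def x_deriv_coeffs_def euler_coeffs_def by (simp add: algebra_simps)

lemma admissible_L_coeffs:
  assumes g: "admissible \<beta>" shows "admissible (L_coeffs m K \<beta>)"
proof (rule admissible_dominated[OF g, of "16 * pi^2 * real m" "4 * (real K + 1)"])
  fix N n
  have "norm (L_coeffs m K \<beta> N n) \<le> norm (8 * pi * \<i> * of_nat m * (2 * pi * \<i> * of_nat N * \<beta> N n))
     + norm (4 * of_nat (Suc n) * of_nat (n + K) * \<beta> N (Suc n))"
    unfolding L_coeffs_eq by (rule norm_triangle_ineq4)
  also have "\<dots> = 16 * pi^2 * real m * real N * norm (\<beta> N n) + 4 * (real (Suc n) * real (n + K)) * norm (\<beta> N (Suc n))"
    by (simp add: norm_mult power2_eq_square del: of_nat_Suc of_nat_add)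
  also have "real (Suc n) * real (n + K) \<le> (real K + 1) * real (Suc n)^2"
  proof -
    have "real (n + K) \<le> (real K + 1) * real (Suc n)" by (simp add: algebra_simps)
    then have "real (Suc n) * real (n + K) \<le> real (Suc n) * ((real K + 1) * real (Suc n))"
      by (intro mult_left_mono) auto
    then show ?thesis by (simp add: power2_eq_square mult_ac)
  qed
  then have "16 * pi^2 * real m * real N * norm (\<beta> N n) + 4 * (real (Suc n) * real (n + K)) * norm (\<beta> N (Suc n))
      \<le> 16 * pi^2 * real m * real N * norm (\<beta> N n) + 4 * ((real K + 1) * real (Suc n)^2) * norm (\<beta> N (Suc n))"
    by (intro add_left_mono mult_right_mono mult_left_mono) auto
  finally show "norm (L_coeffs m K \<beta> N n) \<le> 16 * pi^2 * real m * real N * norm (\<beta> N n) + 4 * (real K + 1) * real (Suc n)^2 * norm (\<beta> N (Suc n))"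
    by (simp add: algebra_simps)
qed auto

lemma pseries_euler_coeffs:
  assumes g: "admissible \<beta>"
  shows "pseries (euler_coeffs \<beta>) N x = x * pseries (x_deriv_coeffs (x_deriv_coeffs \<beta>)) N x"
proof -
  have g2: "admissible (x_deriv_coeffs (x_deriv_coeffs \<beta>))" using admissible_x_deriv[OF admissible_x_deriv[OF g]] .
  have sx: "summable (\<lambda>n. x_deriv_coeffs (x_deriv_coeffs \<beta>) N n * x^n)" by (rule pseries_summable[OF g2])
  have eq: "euler_coeffs \<beta> N (Suc n) * x ^ Suc n = x * (x_deriv_coeffs (x_deriv_coeffs \<beta>) N n * x^n)" for n
    unfolding euler_coeffs_def x_deriv_coeffs_def by (simp add: algebra_simps del: of_nat_Suc)
  have sS: "summable (\<lambda>n. euler_coeffs \<beta> N (Suc n) * x ^ Suc n)" unfolding eq by (intro summable_mult sx)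
  have s: "summable (\<lambda>n. euler_coeffs \<beta> N n * x ^ n)" using sS by (subst (asm) summable_Suc_iff)
  have "pseries (euler_coeffs \<beta>) N x = (\<Sum>n. euler_coeffs \<beta> N (Suc n) * x ^ Suc n)"
    unfolding pseries_def suminf_split_head[OF s] by (simp add: euler_coeffs_def)
  also have "\<dots> = x * pseries (x_deriv_coeffs (x_deriv_coeffs \<beta>)) N x" unfolding eq pseries_def by (rule suminf_mult[OF sx])
  finally show ?thesis .
qed

lemma admissible_euler_coeffs:
  assumes g: "admissible \<beta>" shows "admissible (euler_coeffs \<beta>)"
proof (rule admissible_dominated[OF g, of 0 1])
  fix N n
  have "norm (euler_coeffs \<beta> N n) = real n * real (Suc n) * norm (\<beta> N (Suc n))"
    unfolding euler_coeffs_def x_deriv_coeffs_def by (simp only: norm_mult norm_of_nat mult.assoc)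
  also have "\<dots> \<le> real (Suc n)^2 * norm (\<beta> N (Suc n))"
    by (intro mult_right_mono) (simp_all add: power2_eq_square)
  finally show "norm (euler_coeffs \<beta> N n) \<le> 0 * real N * norm (\<beta> N n) + 1 * real (Suc n)^2 * norm (\<beta> N (Suc n))"
    by simp
qed auto

lemma jseries_L_coeffs:
  assumes g: "admissible \<beta>" and s: "Im s > 0"
  shows "jseries (L_coeffs m K \<beta>) s x = 8 * pi * \<i> * of_nat m * jseries (tau_deriv_coeffs \<beta>) s x + (- 4 * of_nat K) * jseries (x_deriv_coeffs \<beta>) s x
      + (-4 * x) * jseries (x_deriv_coeffs (x_deriv_coeffs \<beta>)) s x"
proof -
  have g1: "admissible (tau_deriv_coeffs \<beta>)" "admissible (x_deriv_coeffs \<beta>)" "admissible (x_deriv_coeffs (x_deriv_coeffs \<beta>))" "admissible (euler_coeffs \<beta>)"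
    using g admissible_tau_deriv admissible_x_deriv admissible_euler_coeffs by auto
  have "jseries (L_coeffs m K \<beta>) s x = qseries (\<lambda>N. 8 * pi * \<i> * of_nat m * pseries (tau_deriv_coeffs \<beta>) N x + (- 4 * of_nat K) * pseries (x_deriv_coeffs \<beta>) N x
      + (-4 * x) * pseries (x_deriv_coeffs (x_deriv_coeffs \<beta>)) N x) s"
    unfolding jseries_def L_coeffs_def[abs_def] pseries_linear3[OF g1(1,2,4)] pseries_euler_coeffs[OF g] by (simp add: mult.assoc)
  also have "\<dots> = 8 * pi * \<i> * of_nat m * jseries (tau_deriv_coeffs \<beta>) s x + (- 4 * of_nat K) * jseries (x_deriv_coeffs \<beta>) s x
      + (-4 * x) * jseries (x_deriv_coeffs (x_deriv_coeffs \<beta>)) s x"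
    unfolding jseries_def by (rule qseries_linear3[OF admissible_pseries_rapid_decay admissible_pseries_rapid_decay admissible_pseries_rapid_decay s]) (use g1 in auto)
  finally show ?thesis .
qed

lemma jseries_deriv_scaled_left:
  assumes "admissible \<beta>" "Im s > 0"
  shows "((\<lambda>w. jseries \<beta> s (c * w)) has_field_derivative jseries (x_deriv_coeffs \<beta>) s (c * w) * c) (at w)"
proof -
  have "((\<lambda>w. c * w) has_field_derivative c) (at w)" by (auto intro!: derivative_eq_intros)
  from DERIV_chain2[OF jseries_deriv_x[OF assms] this] show ?thesis .
qed

lemma jseries_deriv_scaled_right:
  assumes "admissible \<beta>" "Im s > 0"
  shows "((\<lambda>w. jseries \<beta> s (w * c)) has_field_derivative jseries (x_deriv_coeffs \<beta>) s (w * c) * c) (at w)"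
proof -
  have "((\<lambda>w. w * c) has_field_derivative c) (at w)" by (auto intro!: derivative_eq_intros)
  from DERIV_chain2[OF jseries_deriv_x[OF assms] this] show ?thesis .
qed

lemma Lop_jseries:
  assumes g: "admissible \<beta>" and s: "Im s > 0" and z1: "z1 \<noteq> 0" and z2: "z2 \<noteq> 0"
    and f: "\<And>s' a b. Im s' > 0 \<Longrightarrow> a \<noteq> 0 \<Longrightarrow> b \<noteq> 0 \<Longrightarrow> f s' a b = jseries \<beta> s' (a * b)"
  shows "Lop K m f s z1 z2 = jseries (L_coeffs m K \<beta>) s (z1 * z2)"
proof -
  have gx: "admissible (x_deriv_coeffs \<beta>)" using admissible_x_deriv[OF g] .
  have deriv_tau: "deriv (\<lambda>s'. f s' z1 z2) s = jseries (tau_deriv_coeffs \<beta>) s (z1 * z2)"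
  proof -
    have "eventually (\<lambda>s'. f s' z1 z2 = jseries \<beta> s' (z1 * z2)) (nhds s)"
      using eventually_upper_half[OF s] by (rule eventually_mono) (use f z1 z2 in auto)
    then have "deriv (\<lambda>s'. f s' z1 z2) s = deriv (\<lambda>s'. jseries \<beta> s' (z1 * z2)) s" by (rule deriv_cong_ev) simp
    also have "\<dots> = jseries (tau_deriv_coeffs \<beta>) s (z1 * z2)" by (rule DERIV_imp_deriv[OF jseries_deriv_tau[OF g s]])
    finally show ?thesis .
  qed
  have deriv_z2: "deriv (\<lambda>w. f s z1 w) z2 = jseries (x_deriv_coeffs \<beta>) s (z1 * z2) * z1"
  proof -
    have "eventually (\<lambda>w. f s z1 w = jseries \<beta> s (z1 * w)) (nhds z2)"
      using eventually_nonzero[OF z2] by (rule eventually_mono) (use f z1 s in auto)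
    then have "deriv (\<lambda>w. f s z1 w) z2 = deriv (\<lambda>w. jseries \<beta> s (z1 * w)) z2" by (rule deriv_cong_ev) simp
    also have "\<dots> = jseries (x_deriv_coeffs \<beta>) s (z1 * z2) * z1" by (rule DERIV_imp_deriv[OF jseries_deriv_scaled_left[OF g s]])
    finally show ?thesis .
  qed
  have deriv_z1: "deriv (\<lambda>v. f s v w) v0 = jseries (x_deriv_coeffs \<beta>) s (v0 * w) * w" if v0: "v0 \<noteq> 0" and w: "w \<noteq> 0" for v0 w
  proof -
    have "eventually (\<lambda>v. f s v w = jseries \<beta> s (v * w)) (nhds v0)"
      using eventually_nonzero[OF v0] by (rule eventually_mono) (use f w s in auto)
    then have "deriv (\<lambda>v. f s v w) v0 = deriv (\<lambda>v. jseries \<beta> s (v * w)) v0" by (rule deriv_cong_ev) simp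
    also have "\<dots> = jseries (x_deriv_coeffs \<beta>) s (v0 * w) * w" by (rule DERIV_imp_deriv[OF jseries_deriv_scaled_right[OF g s]])
    finally show ?thesis .
  qed
  have deriv_mixed: "deriv (\<lambda>w. deriv (\<lambda>v. f s v w) z1) z2 = jseries (x_deriv_coeffs (x_deriv_coeffs \<beta>)) s (z1 * z2) * z1 * z2 + jseries (x_deriv_coeffs \<beta>) s (z1 * z2)"
  proof -
    have "eventually (\<lambda>w. deriv (\<lambda>v. f s v w) z1 = jseries (x_deriv_coeffs \<beta>) s (z1 * w) * w) (nhds z2)"
      using eventually_nonzero[OF z2] by (rule eventually_mono) (use deriv_z1 z1 in auto)
    then have "deriv (\<lambda>w. deriv (\<lambda>v. f s v w) z1) z2 = deriv (\<lambda>w. jseries (x_deriv_coeffs \<beta>) s (z1 * w) * w) z2"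
      by (rule deriv_cong_ev) simp
    also have "\<dots> = jseries (x_deriv_coeffs (x_deriv_coeffs \<beta>)) s (z1 * z2) * z1 * z2 + jseries (x_deriv_coeffs \<beta>) s (z1 * z2)"
    proof (rule DERIV_imp_deriv)
      have "((\<lambda>w. jseries (x_deriv_coeffs \<beta>) s (z1 * w) * w) has_field_derivative
            jseries (x_deriv_coeffs (x_deriv_coeffs \<beta>)) s (z1 * z2) * z1 * z2 + 1 * jseries (x_deriv_coeffs \<beta>) s (z1 * z2)) (at z2)"
        by (rule DERIV_mult[OF jseries_deriv_scaled_left[OF gx s] DERIV_ident])
      then show "((\<lambda>w. jseries (x_deriv_coeffs \<beta>) s (z1 * w) * w) has_field_derivative
            jseries (x_deriv_coeffs (x_deriv_coeffs \<beta>)) s (z1 * z2) * z1 * z2 + jseries (x_deriv_coeffs \<beta>) s (z1 * z2)) (at z2)" by simp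
    qed
    finally show ?thesis .
  qed
  have "Lop K m f s z1 z2 = 8 * pi * \<i> * of_nat m * jseries (tau_deriv_coeffs \<beta>) s (z1 * z2)
      - (2 * of_nat K - 2) / z1 * (jseries (x_deriv_coeffs \<beta>) s (z1 * z2) * z1)
      - (2 * of_nat K - 2) / z2 * (jseries (x_deriv_coeffs \<beta>) s (z1 * z2) * z2)
      - 4 * (jseries (x_deriv_coeffs (x_deriv_coeffs \<beta>)) s (z1 * z2) * z1 * z2 + jseries (x_deriv_coeffs \<beta>) s (z1 * z2))"
    unfolding Lop_def deriv_tau deriv_z2 deriv_z1[OF z1 z2] deriv_mixed ..
  also have "\<dots> = jseries (L_coeffs m K \<beta>) s (z1 * z2)"
    unfolding jseries_L_coeffs[OF g s] using z1 z2 by (simp add: field_simps)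
  finally show ?thesis .
qed

fun Dtilde_coeffs :: "nat \<Rightarrow> nat \<Rightarrow> (nat \<Rightarrow> nat \<Rightarrow> complex) \<Rightarrow> nat \<Rightarrow> nat \<Rightarrow> nat \<Rightarrow> complex" where
  "Dtilde_coeffs k m \<beta> 0 = \<beta>"
| "Dtilde_coeffs k m \<beta> (Suc j) = L_coeffs m (k + 2 * j) (Dtilde_coeffs k m \<beta> j)"

lemma admissible_Dtilde_coeffs: "admissible \<beta> \<Longrightarrow> admissible (Dtilde_coeffs k m \<beta> j)"
  by (induction j) (auto intro: admissible_L_coeffs)

lemma Dtilde_jseries:
  assumes g: "admissible \<beta>"
    and f: "\<And>s' a b. Im s' > 0 \<Longrightarrow> a \<noteq> 0 \<Longrightarrow> b \<noteq> 0 \<Longrightarrow> f s' a b = jseries \<beta> s' (a * b)"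
  shows "Im s > 0 \<Longrightarrow> a \<noteq> 0 \<Longrightarrow> b \<noteq> 0 \<Longrightarrow> Dtilde k m j f s a b = jseries (Dtilde_coeffs k m \<beta> j) s (a * b)"
proof (induction j arbitrary: s a b)
  case 0
  then show ?case using f by simp
next
  case (Suc j)
  show ?case using Lop_jseries[OF admissible_Dtilde_coeffs[OF g] Suc.prems Suc.IH] by simp
qed

text \<open>D_j is the limit at the origin taken off the coordinate axes, where tilde D_j is
  defined; the value of a continuous H_gamma at x = 0 is that limit.\<close>

definition off_axes :: "(complex \<times> complex) set" where
  "off_axes = {p. fst p \<noteq> 0 \<and> snd p \<noteq> 0}"

lemma off_axes_limpt: "(0, 0) islimpt off_axes"
  unfolding islimpt_approachable
proof (intro allI impI)
  fix e :: real assume e: "e > 0"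
  define x' where "x' = (complex_of_real (e/3), complex_of_real (e/3))"
  have "x' \<in> off_axes" unfolding x'_def off_axes_def using e by simp
  moreover have "x' \<noteq> (0,0)" unfolding x'_def using e by simp
  moreover have "dist x' (0,0) < e"
  proof -
    have "dist x' (0,0) = norm x'" by (simp add: dist_norm zero_prod_def[symmetric])
    also have "\<dots> \<le> norm (complex_of_real (e/3)) + norm (complex_of_real (e/3))"
      unfolding x'_def by (rule norm_Pair_le)
    also have "\<dots> < e" using e by simp
    finally show ?thesis .
  qed
  ultimately show "\<exists>x'\<in>off_axes. x' \<noteq> (0, 0) \<and> dist x' (0, 0) < e" by blast
qed

lemma Dop_jseries:
  assumes g: "admissible \<gamma>" and t: "Im t > 0"
    and D: "\<And>a b. a \<noteq> 0 \<Longrightarrow> b \<noteq> 0 \<Longrightarrow> Dtilde k m j (diag_part chi) t a b = jseries \<gamma> t (a * b)"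
  shows "Dop k m j chi t = jseries \<gamma> t 0"
proof -
  have nt: "at (0::complex, 0::complex) within off_axes \<noteq> bot"
    using off_axes_limpt trivial_limit_within by blast
  have c: "isCont (\<lambda>x. jseries \<gamma> t x) 0" by (rule DERIV_isCont[OF jseries_deriv_x[OF g t]])
  have l1: "((\<lambda>p::complex\<times>complex. fst p * snd p) \<longlongrightarrow> 0) (at (0,0) within off_axes)"
  proof -
    have "((\<lambda>p::complex\<times>complex. fst p * snd p) \<longlongrightarrow> fst (0::complex,0::complex) * snd (0::complex,0::complex)) (at (0,0) within off_axes)"
      by (intro tendsto_mult tendsto_fst tendsto_snd tendsto_ident_at)
    then show ?thesis by simp
  qed
  have l2: "((\<lambda>p. jseries \<gamma> t (fst p * snd p)) \<longlongrightarrow> jseries \<gamma> t 0) (at (0,0) within off_axes)"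
    by (rule isCont_tendsto_compose[OF c l1])
  have ev: "eventually (\<lambda>p. (\<lambda>(z1, z2). Dtilde k m j (diag_part chi) t z1 z2) p = jseries \<gamma> t (fst p * snd p)) (at (0,0) within off_axes)"
    unfolding eventually_at_filter off_axes_def by (rule always_eventually) (auto simp: D)
  have "((\<lambda>(z1, z2). Dtilde k m j (diag_part chi) t z1 z2) \<longlongrightarrow> jseries \<gamma> t 0) (at (0,0) within off_axes)"
    using l2 tendsto_cong[OF ev] by simp
  then show ?thesis unfolding Dop_def off_axes_def[symmetric] by (rule tendsto_Lim[OF nt])
qed

section \<open>Uniqueness of power series coefficients\<close>

text \<open>A power series (in one or two variables) summing to 0 everywhere has zero coefficients.
  This identifies the Taylor coefficients chi of phi with those obtained from its
  Fourier expansion.\<close>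

lemma power_series_zero_unique:
  fixes c :: "nat \<Rightarrow> complex"
  assumes h: "\<And>z. ((\<lambda>n. c n * z^n) has_sum 0) UNIV"
  shows "c n = 0"
proof -
  have sm: "(\<lambda>n. c n * z^n) sums 0" for z using has_sum_imp_sums[OF h] .
  define f where "f = Abs_fps c"
  have fn: "fps_nth f = c" unfolding f_def by (simp add: Abs_fps_inverse)
  have r: "fps_conv_radius f > 0"
  proof -
    have "ereal (norm (1::complex)) \<le> conv_radius c"
      by (rule conv_radius_geI) (use sm[of 1] in \<open>simp add: sums_iff\<close>)
    then have "ereal 1 \<le> conv_radius c" by simp
    moreover have "(0::ereal) < ereal 1" by simp
    ultimately show ?thesis unfolding fps_conv_radius_def fn by (rule order.strict_trans2[rotated])
  qed
  have "f = 0"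
  proof (rule eval_fps_eqD[OF r])
    show "fps_conv_radius (0 :: complex fps) > 0" by simp
    show "eventually (\<lambda>z. eval_fps f z = eval_fps 0 z) (nhds 0)"
      by (rule always_eventually) (use sm in \<open>auto simp: eval_fps_def fn sums_iff\<close>)
  qed
  then have "fps_nth f n = 0" by simp
  then show ?thesis using fn by simp
qed

lemma double_power_series_zero_unique:
  fixes d :: "nat \<Rightarrow> nat \<Rightarrow> complex"
  assumes h: "\<And>z1 z2. ((\<lambda>(a,b). d a b * z1^a * z2^b) has_sum 0) UNIV"
  shows "d a b = 0"
proof -
  have U: "(UNIV :: (nat \<times> nat) set) = Sigma UNIV (\<lambda>_. UNIV)" by simp
  have inner_sm: "(\<lambda>b. d a b * z1^a * z2^b) summable_on UNIV" for a z1 z2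
  proof -
    have "(\<lambda>(a,b). d a b * z1^a * z2^b) summable_on Sigma UNIV (\<lambda>_. UNIV)"
      using has_sum_imp_summable[OF h[of z1 z2]] by simp
    from summable_on_SigmaD1[OF this, of a] show ?thesis by simp
  qed
  have c0: "infsum (\<lambda>b. d a b * z2^b) UNIV = 0" for a z2
  proof -
    define c where "c a = infsum (\<lambda>b. d a b * z2^b) UNIV" for a
    have "((\<lambda>n. c n * z1^n) has_sum 0) UNIV" for z1
    proof -
      have hs: "((\<lambda>(a,b). d a b * z1^a * z2^b) has_sum 0) (Sigma UNIV (\<lambda>_. UNIV))" using h[of z1 z2] U by simp
      have "((\<lambda>a. infsum (\<lambda>b. d a b * z1^a * z2^b) UNIV) has_sum 0) UNIV"
        by (rule has_sum_Sigma'[OF hs]) (use inner_sm in auto)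
      moreover have "infsum (\<lambda>b. d a b * z1^a * z2^b) UNIV = c a * z1^a" for a
      proof -
        have "infsum (\<lambda>b. z1^a * (d a b * z2^b)) UNIV = z1^a * infsum (\<lambda>b. d a b * z2^b) UNIV"
          by (rule infsum_cmult_right) (use inner_sm[of a 1 z2] in simp)
        then show ?thesis unfolding c_def by (simp add: mult_ac)
      qed
      ultimately show ?thesis by simp
    qed
    from power_series_zero_unique[OF this] show ?thesis unfolding c_def .
  qed
  have "((\<lambda>b. d a b * z2^b) has_sum 0) UNIV" for z2
    using has_sum_infsum[of "\<lambda>b. d a b * z2^b" UNIV] inner_sm[of a 1 z2] c0[of a z2] by simp
  from power_series_zero_unique[OF this] show ?thesis .
qed

section \<open>Elementary estimates and series facts\<close>

lemma int_abs_le_sq: "\<bar>x::int\<bar> \<le> x^2"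
proof (cases "x = 0")
  case False
  then have "1 \<le> \<bar>x\<bar>" by simp
  then have "\<bar>x\<bar> * 1 \<le> \<bar>x\<bar> * \<bar>x\<bar>" by (intro mult_left_mono) auto
  then show ?thesis by (simp add: power2_eq_square abs_mult[symmetric])
qed simp

lemma exp_ge_pow: "(x::real) \<ge> 0 \<Longrightarrow> x ^ n / fact n \<le> exp x"
proof -
  assume x: "x \<ge> 0"
  have s: "(\<lambda>k. x ^ k / fact k) sums exp x" using exp_converges[of x] by (simp add: divide_inverse mult.commute)
  have "sum (\<lambda>k. x ^ k / fact k) {n} \<le> (\<Sum>k. x ^ k / fact k)"
    by (rule sum_le_suminf) (use s x in \<open>auto simp: sums_iff\<close>)
  then show ?thesis using s by (simp add: sums_iff)
qed

lemma pow_exp_bound: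
  assumes u: "u > 0"
  shows "real N ^ a * exp (- u * real N) \<le> fact a / u ^ a"
proof -
  have "(u * real N) ^ a / fact a \<le> exp (u * real N)" using u by (intro exp_ge_pow) simp
  then have "u ^ a * real N ^ a \<le> fact a * exp (u * real N)"
    by (simp add: power_mult_distrib field_simps)
  then have "real N ^ a \<le> fact a * exp (u * real N) / u ^ a" using u by (simp add: field_simps)
  then have "real N ^ a * exp (- u * real N) \<le> fact a * exp (u * real N) / u ^ a * exp (- u * real N)"
    by (intro mult_right_mono) auto
  also have "\<dots> = fact a / u ^ a" by (simp add: exp_minus field_simps)
  finally show ?thesis .
qed

text \<open>The squared exponential series, which majorises the diagonal Taylor coefficients.\<close>

lemma sq_sum_le:
  fixes a :: "nat \<Rightarrow> real"
  assumes nn: "\<And>n. a n \<ge> 0" and s: "summable a"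
  shows "summable (\<lambda>n. (a n)^2) \<and> (\<Sum>n. (a n)^2) \<le> (\<Sum>n. a n)^2"
proof -
  have le: "a n \<le> suminf a" for n
    using sum_le_suminf[OF s, of "{n}"] nn by simp
  have b: "(a n)^2 \<le> suminf a * a n" for n
    unfolding power2_eq_square using le[of n] nn[of n] by (intro mult_right_mono) auto
  have s2: "summable (\<lambda>n. suminf a * a n)" by (rule summable_mult[OF s])
  have ss: "summable (\<lambda>n. (a n)^2)" by (rule summable_comparison_test'[OF s2]) (use b in auto)
  have "(\<Sum>n. (a n)^2) \<le> (\<Sum>n. suminf a * a n)" by (rule suminf_le[OF b ss s2])
  also have "\<dots> = (\<Sum>n. a n)^2" by (simp add: suminf_mult[OF s] power2_eq_square)
  finally show ?thesis using ss by simp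
qed

lemma exp_sq_series:
  assumes c: "(c::real) \<ge> 0"
  shows "summable (\<lambda>n. (c ^ n / fact n)^2) \<and> (\<Sum>n. (c ^ n / fact n)^2) \<le> exp (2 * c)"
proof -
  have s: "(\<lambda>n. c ^ n / fact n) sums exp c" using exp_converges[of c] by (simp add: divide_inverse mult.commute)
  have "summable (\<lambda>n. (c ^ n / fact n)^2) \<and> (\<Sum>n. (c ^ n / fact n)^2) \<le> (\<Sum>n. c ^ n / fact n)^2"
    by (rule sq_sum_le) (use s c in \<open>auto simp: sums_iff\<close>)
  moreover have "(\<Sum>n. c ^ n / fact n)^2 = exp (2 * c)" using s
    by (simp add: sums_iff power2_eq_square exp_add[symmetric])
  ultimately show ?thesis by simp
qed

lemma exp_abs_le: "exp (c * \<bar>x::real\<bar>) \<le> exp (c * x) + exp (- c * x)"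
proof (cases "x \<ge> 0")
  case True
  show ?thesis by (subst abs_of_nonneg[OF True]) simp
next
  case False
  then have "\<bar>x\<bar> = - x" by simp
  show ?thesis by (subst \<open>\<bar>x\<bar> = - x\<close>) simp
qed

lemma exp_cmod_le:
  assumes rho: "\<rho> \<ge> 0"
  shows "exp (\<rho> * cmod r) \<le> exp (2 * \<rho> * Re r) + exp (- (2 * \<rho>) * Re r) + exp (2 * \<rho> * Im r) + exp (- (2 * \<rho>) * Im r)"
proof -
  have c: "cmod r \<le> \<bar>Re r\<bar> + \<bar>Im r\<bar>" by (rule cmod_le)
  have a: "exp (\<rho> * cmod r) \<le> exp (2 * \<rho> * \<bar>Re r\<bar>) + exp (2 * \<rho> * \<bar>Im r\<bar>)"
  proof (cases "\<bar>Re r\<bar> \<ge> \<bar>Im r\<bar>")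
    case True
    have "\<rho> * cmod r \<le> \<rho> * (\<bar>Re r\<bar> + \<bar>Im r\<bar>)" using c by (rule mult_left_mono[OF _ rho])
    also have "\<dots> \<le> 2 * \<rho> * \<bar>Re r\<bar>" using True rho by (simp add: algebra_simps mult_left_mono)
    finally have "exp (\<rho> * cmod r) \<le> exp (2 * \<rho> * \<bar>Re r\<bar>)" by simp
    then show ?thesis by (simp add: add_increasing2)
  next
    case False
    have "\<rho> * cmod r \<le> \<rho> * (\<bar>Re r\<bar> + \<bar>Im r\<bar>)" using c by (rule mult_left_mono[OF _ rho])
    also have "\<dots> \<le> 2 * \<rho> * \<bar>Im r\<bar>" using False rho by (simp add: algebra_simps mult_left_mono)
    finally have "exp (\<rho> * cmod r) \<le> exp (2 * \<rho> * \<bar>Im r\<bar>)" by simp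
    then show ?thesis by (simp add: add_increasing)
  qed
  also have "\<dots> \<le> (exp (2 * \<rho> * Re r) + exp (- (2 * \<rho>) * Re r)) + (exp (2 * \<rho> * Im r) + exp (- (2 * \<rho>) * Im r))"
    by (intro add_mono exp_abs_le)
  finally show ?thesis by (simp add: add.assoc)
qed

lemma exp_sums': "(\<lambda>n. u^n / fact n) sums exp (u::'a::{real_normed_field,banach})"
proof -
  have "(\<lambda>n. u^n /\<^sub>R fact n) = (\<lambda>n. u^n / fact n)"
    by (rule ext) (simp add: scaleR_conv_of_real divide_inverse mult.commute)
  then show ?thesis using exp_converges[of u] by simp
qed

lemma exp_has_sum: "((\<lambda>n. u^n / fact n) has_sum exp (u::'a::{real_normed_field,banach})) UNIV"
proof (rule norm_summable_imp_has_sum[OF _ exp_sums'])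
  have "(\<lambda>n. norm u^n / fact n) sums exp (norm u)" by (rule exp_sums')
  then show "summable (\<lambda>n. norm (u ^ n / fact n))" by (simp add: norm_divide norm_power sums_iff)
qed

lemma exp_prod_has_sum:
  fixes u v :: "'a::{real_normed_field,banach}"
  shows "((\<lambda>(a,b). u^a / fact a * (v^b / fact b)) has_sum (exp u * exp v)) UNIV"
proof -
  have U: "(UNIV :: (nat \<times> nat) set) = Sigma UNIV (\<lambda>_. UNIV)" by simp
  have inner: "((\<lambda>b. (\<lambda>(a,b). u^a / fact a * (v^b / fact b)) (a, b)) has_sum (u^a / fact a * exp v)) UNIV" for a
    using has_sum_cmult_right[OF exp_has_sum[of v], of "u^a / fact a"] by simp
  have outer: "((\<lambda>a. u^a / fact a * exp v) has_sum (exp u * exp v)) UNIV"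
    using has_sum_cmult_left[OF exp_has_sum[of u], of "exp v"] by simp
  have nsum: "(\<lambda>x. norm ((\<lambda>(a,b). u^a / fact a * (v^b / fact b)) x)) summable_on Sigma UNIV (\<lambda>_. UNIV)"
  proof (rule summable_on_SigmaI)
    show "((\<lambda>b. norm ((\<lambda>(a,b). u^a / fact a * (v^b / fact b)) (a, b))) has_sum (norm u^a / fact a * exp (norm v))) UNIV" for a
      using has_sum_cmult_right[OF exp_has_sum[of "norm v"], of "norm u^a / fact a"]
      by (simp add: norm_mult norm_divide norm_power)
    show "(\<lambda>a. norm u^a / fact a * exp (norm v)) summable_on UNIV"
      using has_sum_cmult_left[OF exp_has_sum[of "norm u"], of "exp (norm v)"] by (auto simp: summable_on_def)
  qed auto
  have sm: "(\<lambda>(a,b). u^a / fact a * (v^b / fact b)) summable_on Sigma UNIV (\<lambda>_. UNIV)"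
    by (rule abs_summable_summable[OF nsum])
  have "((\<lambda>(a,b). u^a / fact a * (v^b / fact b)) has_sum (exp u * exp v)) (Sigma UNIV (\<lambda>_. UNIV))"
    by (rule has_sum_SigmaI[OF inner outer sm])
  then show ?thesis by simp
qed

lemma infsum_suminf_norm:
  fixes f :: "nat \<Rightarrow> complex"
  assumes "summable (\<lambda>n. norm (f n))"
  shows "infsum f UNIV = suminf f"
  by (rule infsumI[OF norm_summable_imp_has_sum[OF assms summable_sums[OF summable_norm_cancel[OF assms]]]])

lemma infsum_suminf:
  fixes f :: "nat \<Rightarrow> complex"
  assumes "f summable_on UNIV"
  shows "infsum f UNIV = suminf f"
  using sums_unique[OF has_sum_imp_sums[OF has_sum_infsum[OF assms]]] by simp

section \<open>The diagonal coefficients of a Jacobi form\<close>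

definition fourier_support :: "nat \<Rightarrow> nat \<Rightarrow> complex set" where
  "fourier_support m N = {r. r \<in> dual_lattice \<and> (cmod r)\<^sup>2 \<le> real (N * m)}"

lemma fourier_index_set_eq: "{(n, r). r \<in> dual_lattice \<and> (cmod r)\<^sup>2 \<le> real (n * m)} = Sigma UNIV (fourier_support m)"
  unfolding fourier_support_def by auto

lemma dual_lattice_elem:
  assumes "r \<in> dual_lattice"
  obtains x y :: int where "r = Complex (- of_int y / 2) (of_int x / 2)"
proof -
  from assms obtain x y :: int where "r = \<i> / 2 * Complex (of_int x) (of_int y)"
    unfolding dual_lattice_def gauss_ints_def by blast
  then have "r = Complex (- of_int y / 2) (of_int x / 2)" by (simp add: complex_eq_iff)
  then show ?thesis using that by blast
qed

lemma finite_fourier_support: "finite (fourier_support m N)"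
proof -
  define M where "M = int (4 * N * m)"
  have "fourier_support m N \<subseteq> (\<lambda>(x,y). Complex (- of_int y / 2) (of_int x / 2)) ` ({-M..M} \<times> {-M..M})"
  proof
    fix r assume r: "r \<in> fourier_support m N"
    then have rd: "r \<in> dual_lattice" and rn: "(cmod r)\<^sup>2 \<le> real (N * m)" unfolding fourier_support_def by auto
    obtain x y :: int where rxy: "r = Complex (- of_int y / 2) (of_int x / 2)" using dual_lattice_elem[OF rd] .
    have re: "Re r = - of_int y / 2" and im: "Im r = of_int x / 2" unfolding rxy by simp_all
    have "(cmod r)\<^sup>2 = (Re r)^2 + (Im r)^2" by (rule cmod_power2)
    also have "\<dots> = (real_of_int (x^2) + real_of_int (y^2)) / 4" unfolding re im by (simp add: power2_eq_square)
    finally have "(real_of_int (x^2) + real_of_int (y^2)) / 4 \<le> real (N * m)" using rn by simp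
    then have xy: "real_of_int (x^2) + real_of_int (y^2) \<le> real_of_int M" unfolding M_def by simp
    have xy': "(real_of_int x)^2 + (real_of_int y)^2 \<le> real_of_int M" using xy by simp
    have "(real_of_int x)^2 \<le> real_of_int M" "(real_of_int y)^2 \<le> real_of_int M"
      using xy' zero_le_power2[of "real_of_int x"] zero_le_power2[of "real_of_int y"] by linarith+
    then have "x^2 \<le> M" "y^2 \<le> M" by (metis of_int_le_iff of_int_power)+
    then have "\<bar>x\<bar> \<le> M" "\<bar>y\<bar> \<le> M" using int_abs_le_sq[of x] int_abs_le_sq[of y] by linarith+
    then have "(x, y) \<in> {-M..M} \<times> {-M..M}" by auto
    then show "r \<in> (\<lambda>(x,y). Complex (- of_int y / 2) (of_int x / 2)) ` ({-M..M} \<times> {-M..M})"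
      unfolding rxy by force
  qed
  then show ?thesis by (rule finite_subset) auto
qed

text \<open>The same bound, written with the four test points z1 = c i, -c i, -c, c
  (c = rho / (2 pi)) at which the Fourier expansion is evaluated below.\<close>

lemma exp_cmod_le_directions:
  assumes rho: "\<rho> \<ge> 0"
  defines "c \<equiv> \<rho> / (2 * pi)"
  shows "exp (\<rho> * cmod r) \<le> exp (-4*pi*Im (r * (\<i> * of_real c))) + exp (-4*pi*Im (r * (- \<i> * of_real c))) +
        exp (-4*pi*Im (r * (- of_real c))) + exp (-4*pi*Im (r * (of_real c)))"
proof -
  have h1: "-4*pi*(c*u) = -(2*\<rho>)*u" for u unfolding c_def by (simp add: field_simps)
  have h2: "-4*pi*(-(c*u)) = 2*\<rho>*u" for u unfolding c_def by (simp add: field_simps)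
  have "Im (r * (\<i> * of_real c)) = c * Re r" by simp
  then have i1: "exp (-4*pi*Im (r * (\<i> * of_real c))) = exp (- (2 * \<rho>) * Re r)" by (simp only: h1)
  have "Im (r * (- \<i> * of_real c)) = -(c * Re r)" by simp
  then have i2: "exp (-4*pi*Im (r * (- \<i> * of_real c))) = exp (2 * \<rho> * Re r)" by (simp only: h2)
  have "Im (r * (- of_real c)) = -(c * Im r)" by simp
  then have i3: "exp (-4*pi*Im (r * (- of_real c))) = exp (2 * \<rho> * Im r)" by (simp only: h2)
  have "Im (r * (of_real c)) = c * Im r" by simp
  then have i4: "exp (-4*pi*Im (r * (of_real c))) = exp (- (2 * \<rho>) * Im r)" by (simp only: h1)
  show ?thesis unfolding i1 i2 i3 i4 using exp_cmod_le[OF rho, of r] by linarith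
qed

lemma norm_term:
  "norm (c * ee (of_nat N * (\<i> * complex_of_real y) + r * w + cnj r * (- cnj w))) =
     norm c * exp (-2*pi*real N*y) * exp (-4*pi*Im (r * w))"
proof -
  have "Im (of_nat N * (\<i> * complex_of_real y) + r * w + cnj r * (- cnj w)) = real N * y + 2 * Im (r * w)"
    by (simp add: algebra_simps)
  then show ?thesis by (simp add: norm_mult norm_ee exp_add[symmetric] algebra_simps)
qed

definition fourier_expansion :: "nat \<Rightarrow> (nat \<Rightarrow> complex \<Rightarrow> complex) \<Rightarrow> (complex \<Rightarrow> complex \<Rightarrow> complex \<Rightarrow> complex) \<Rightarrow> bool" where
  "fourier_expansion m cf phi \<longleftrightarrow> (\<forall>t z1 z2. Im t > 0 \<longrightarrow>
     ((\<lambda>(n, r). cf n r * ee (of_nat n * t + r * z1 + cnj r * z2)) has_sum phi t z1 z2) (Sigma UNIV (fourier_support m)))"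

lemma fourier_abs_summable_at:
  assumes F: "fourier_expansion m cf phi" and y: "y > 0"
  shows "(\<lambda>(N,r). norm (cf N r) * exp (-2*pi*real N*y) * exp (-4*pi*Im (r * w))) summable_on Sigma UNIV (fourier_support m)"
proof -
  define S where "S = Sigma UNIV (fourier_support m)"
  have "Im (\<i> * complex_of_real y) > 0" using y by simp
  then have "((\<lambda>(n, r). cf n r * ee (of_nat n * (\<i> * complex_of_real y) + r * w + cnj r * (- cnj w))) has_sum
       phi (\<i> * complex_of_real y) w (- cnj w)) S"
    using F unfolding fourier_expansion_def S_def by blast
  then have "(\<lambda>(n, r). cf n r * ee (of_nat n * (\<i> * complex_of_real y) + r * w + cnj r * (- cnj w))) summable_on S"
    by (rule has_sum_imp_summable)
  then have "(\<lambda>x. norm ((\<lambda>(n, r). cf n r * ee (of_nat n * (\<i> * complex_of_real y) + r * w + cnj r * (- cnj w))) x)) summable_on S"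
    using summable_on_iff_abs_summable_on_complex by blast
  then show ?thesis unfolding S_def[symmetric]
    by (rule summable_on_cong[THEN iffD1, rotated]) (auto simp only: norm_term split: prod.splits)
qed

text \<open>Consequently the coefficients, weighted by e^(rho |r|), are summable for every rho:
  the Fourier coefficients decay faster than any exponential in |r|.\<close>

lemma fourier_exp_weight_summable:
  assumes F: "fourier_expansion m cf phi" and y: "y > 0" and rho: "\<rho> \<ge> 0"
  shows "(\<lambda>(N,r). norm (cf N r) * exp (-2*pi*real N*y) * exp (\<rho> * cmod r)) summable_on Sigma UNIV (fourier_support m)"
proof -
  define S where "S = Sigma UNIV (fourier_support m)"
  have hw: "(\<lambda>(N,r). norm (cf N r) * exp (-2*pi*real N*y) * exp (-4*pi*Im (r * w))) summable_on S" for w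
    unfolding S_def by (rule fourier_abs_summable_at[OF F y])
  define c where "c = \<rho> / (2 * pi)"
  have s4: "(\<lambda>x. (\<lambda>(N,r). norm (cf N r) * exp (-2*pi*real N*y) * exp (-4*pi*Im (r * (\<i> * of_real c)))) x +
      (\<lambda>(N,r). norm (cf N r) * exp (-2*pi*real N*y) * exp (-4*pi*Im (r * (- \<i> * of_real c)))) x +
      (\<lambda>(N,r). norm (cf N r) * exp (-2*pi*real N*y) * exp (-4*pi*Im (r * (- of_real c)))) x +
      (\<lambda>(N,r). norm (cf N r) * exp (-2*pi*real N*y) * exp (-4*pi*Im (r * (of_real c)))) x) summable_on S"
    by (intro summable_on_add hw)
  show ?thesis unfolding S_def[symmetric]
  proof (rule summable_on_comparison_test[OF s4])
    fix x assume "x \<in> S"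
    obtain N r where x: "x = (N, r)" by (cases x)
    have "exp (\<rho> * cmod r) \<le> exp (-4*pi*Im (r * (\<i> * of_real c))) + exp (-4*pi*Im (r * (- \<i> * of_real c))) +
        exp (-4*pi*Im (r * (- of_real c))) + exp (-4*pi*Im (r * (of_real c)))"
      unfolding c_def by (rule exp_cmod_le_directions[OF rho])
    then have "norm (cf N r) * exp (-2*pi*real N*y) * exp (\<rho> * cmod r) \<le> norm (cf N r) * exp (-2*pi*real N*y) *
       (exp (-4*pi*Im (r * (\<i> * of_real c))) + exp (-4*pi*Im (r * (- \<i> * of_real c))) +
        exp (-4*pi*Im (r * (- of_real c))) + exp (-4*pi*Im (r * (of_real c))))"
      by (intro mult_left_mono) auto
    then show "(\<lambda>(N,r). norm (cf N r) * exp (-2*pi*real N*y) * exp (\<rho> * cmod r)) x \<le>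
      (\<lambda>(N,r). norm (cf N r) * exp (-2*pi*real N*y) * exp (-4*pi*Im (r * (\<i> * of_real c)))) x +
      (\<lambda>(N,r). norm (cf N r) * exp (-2*pi*real N*y) * exp (-4*pi*Im (r * (- \<i> * of_real c)))) x +
      (\<lambda>(N,r). norm (cf N r) * exp (-2*pi*real N*y) * exp (-4*pi*Im (r * (- of_real c)))) x +
      (\<lambda>(N,r). norm (cf N r) * exp (-2*pi*real N*y) * exp (-4*pi*Im (r * (of_real c)))) x"
      unfolding x by (simp add: algebra_simps)
    show "0 \<le> (\<lambda>(N,r). norm (cf N r) * exp (-2*pi*real N*y) * exp (\<rho> * cmod r)) x" unfolding x by simp
  qed
qed

definition weighted_row :: "nat \<Rightarrow> (nat \<Rightarrow> complex \<Rightarrow> complex) \<Rightarrow> real \<Rightarrow> nat \<Rightarrow> real" where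
  "weighted_row m cf \<rho> N = (\<Sum>r\<in>fourier_support m N. norm (cf N r) * exp (\<rho> * cmod r))"

text \<open>The rows are finite sums, so summability over the index set gives it for the rows.\<close>

lemma weighted_row_summable:
  assumes F: "fourier_expansion m cf phi" and y: "y > 0" and rho: "\<rho> \<ge> 0"
  shows "summable (\<lambda>N. exp (-2*pi*real N*y) * weighted_row m cf \<rho> N)"
proof -
  have "(\<lambda>N. infsum (\<lambda>r. (\<lambda>(N,r). norm (cf N r) * exp (-2*pi*real N*y) * exp (\<rho> * cmod r)) (N, r)) (fourier_support m N)) summable_on UNIV"
    by (rule summable_on_SigmaD[OF fourier_exp_weight_summable[OF F y rho]]) (simp add: finite_fourier_support)
  moreover have "infsum (\<lambda>r. (\<lambda>(N,r). norm (cf N r) * exp (-2*pi*real N*y) * exp (\<rho> * cmod r)) (N, r)) (fourier_support m N) =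
      exp (-2*pi*real N*y) * weighted_row m cf \<rho> N" for N
  proof -
    have "infsum (\<lambda>r. (\<lambda>(N,r). norm (cf N r) * exp (-2*pi*real N*y) * exp (\<rho> * cmod r)) (N, r)) (fourier_support m N) =
        (\<Sum>r\<in>fourier_support m N. norm (cf N r) * exp (-2*pi*real N*y) * exp (\<rho> * cmod r))"
      using finite_fourier_support[of m N] by simp
    also have "\<dots> = exp (-2*pi*real N*y) * weighted_row m cf \<rho> N"
      unfolding weighted_row_def sum_distrib_left by (rule sum.cong) (simp_all add: algebra_simps)
    finally show ?thesis .
  qed
  ultimately have su: "(\<lambda>N. exp (-2*pi*real N*y) * weighted_row m cf \<rho> N) summable_on UNIV" by simp
  have nn: "0 \<le> exp (-2*pi*real N*y) * weighted_row m cf \<rho> N" for N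
    unfolding weighted_row_def by (intro mult_nonneg_nonneg sum_nonneg) auto
  show ?thesis using summable_on_UNIV_nonneg_real_iff[OF nn] su by simp
qed

text \<open>Taylor coefficients of e(r z1 + cnj r z2), and the resulting array beta(N,n) that
  describes the diagonal Taylor coefficients chi_{n,n} of phi.\<close>

definition taylor_coeff :: "complex \<Rightarrow> nat \<Rightarrow> nat \<Rightarrow> complex" where
  "taylor_coeff r a b = (2 * pi * \<i> * r) ^ a * (2 * pi * \<i> * cnj r) ^ b / (fact a * fact b)"

definition diag_coeffs :: "nat \<Rightarrow> (nat \<Rightarrow> complex \<Rightarrow> complex) \<Rightarrow> nat \<Rightarrow> nat \<Rightarrow> complex" where
  "diag_coeffs m cf N n = (\<Sum>r\<in>fourier_support m N. cf N r * taylor_coeff r n n)"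

lemma norm_taylor_coeff_diag:
  assumes R: "R \<ge> 0"
  shows "norm (taylor_coeff r n n) * R ^ n = ((2 * pi * cmod r * sqrt R) ^ n / fact n)^2"
proof -
  have "norm (taylor_coeff r n n) = (2 * pi * cmod r) ^ n * (2 * pi * cmod r) ^ n / (fact n * fact n)"
    unfolding taylor_coeff_def by (simp add: norm_mult norm_power norm_divide)
  moreover have "R ^ n = sqrt R ^ n * sqrt R ^ n" using R by (simp add: power_mult_distrib[symmetric])
  ultimately show ?thesis by (simp add: power2_eq_square power_mult_distrib field_simps)
qed

lemma diag_coeffs_bound:
  assumes R: "R \<ge> 0"
  shows "norm (diag_coeffs m cf N n) * R ^ n \<le> (\<Sum>r\<in>fourier_support m N. norm (cf N r) * ((2 * pi * cmod r * sqrt R) ^ n / fact n)^2)"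
proof -
  have "norm (diag_coeffs m cf N n) * R ^ n \<le> (\<Sum>r\<in>fourier_support m N. norm (cf N r * taylor_coeff r n n)) * R ^ n"
    unfolding diag_coeffs_def using R by (intro mult_right_mono norm_sum) auto
  also have "\<dots> = (\<Sum>r\<in>fourier_support m N. norm (cf N r) * (norm (taylor_coeff r n n) * R ^ n))"
    by (simp add: sum_distrib_right norm_mult mult.assoc)
  finally show ?thesis using norm_taylor_coeff_diag[OF R] by simp
qed

text \<open>The diagonal array is admissible: the squared exponential series bounds its rows
  by weighted_row with rho = 4 pi sqrt R.\<close>

lemma diag_coeffs_majorant:
  assumes R: "R \<ge> 0"
  shows "summable (\<lambda>n. norm (diag_coeffs m cf N n) * R ^ n)"
    and "majorant (diag_coeffs m cf) N R \<le> weighted_row m cf (4 * pi * sqrt R) N"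
proof -
  define a where "a r n = ((2 * pi * cmod r * sqrt R) ^ n / fact n)^2" for r n
  have sa: "summable (\<lambda>n. a r n)" and ea: "(\<Sum>n. a r n) \<le> exp (4 * pi * sqrt R * cmod r)" for r
  proof -
    have "2 * pi * cmod r * sqrt R \<ge> 0" using R by simp
    from exp_sq_series[OF this] show "summable (\<lambda>n. a r n)" "(\<Sum>n. a r n) \<le> exp (4 * pi * sqrt R * cmod r)"
      unfolding a_def by (simp_all add: mult_ac)
  qed
  have ss: "summable (\<lambda>n. \<Sum>r\<in>fourier_support m N. norm (cf N r) * a r n)"
    by (intro summable_sum summable_mult sa)
  have b: "norm (diag_coeffs m cf N n) * R ^ n \<le> (\<Sum>r\<in>fourier_support m N. norm (cf N r) * a r n)" for n
    unfolding a_def by (rule diag_coeffs_bound[OF R])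
  show sb: "summable (\<lambda>n. norm (diag_coeffs m cf N n) * R ^ n)"
    by (rule summable_comparison_test'[OF ss]) (use b R in auto)
  have "majorant (diag_coeffs m cf) N R \<le> (\<Sum>n. \<Sum>r\<in>fourier_support m N. norm (cf N r) * a r n)"
    unfolding majorant_def by (rule suminf_le[OF b sb ss])
  also have "\<dots> = (\<Sum>r\<in>fourier_support m N. \<Sum>n. norm (cf N r) * a r n)"
    by (rule suminf_sum) (intro summable_mult sa)
  also have "\<dots> = (\<Sum>r\<in>fourier_support m N. norm (cf N r) * (\<Sum>n. a r n))"
    by (rule sum.cong[OF refl]) (rule suminf_mult[OF sa])
  also have "\<dots> \<le> (\<Sum>r\<in>fourier_support m N. norm (cf N r) * exp (4 * pi * sqrt R * cmod r))"
    by (intro sum_mono mult_left_mono ea) auto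
  finally show "majorant (diag_coeffs m cf) N R \<le> weighted_row m cf (4 * pi * sqrt R) N"
    unfolding weighted_row_def .
qed

lemma admissible_diag_coeffs:
  assumes F: "fourier_expansion m cf phi"
  shows "admissible (diag_coeffs m cf)"
  unfolding admissible_def
proof (intro conjI allI impI)
  fix N and R :: real assume "R \<ge> 0" then show "summable (\<lambda>n. norm (diag_coeffs m cf N n) * R ^ n)" by (rule diag_coeffs_majorant(1))
next
  fix y R :: real and a :: nat assume y: "y > 0" and R: "R \<ge> 0"
  define C where "C = fact a / (pi * y) ^ a"
  have sW: "summable (\<lambda>N. C * (exp (-2*pi*real N*(y/2)) * weighted_row m cf (4 * pi * sqrt R) N))"
    by (intro summable_mult weighted_row_summable[OF F]) (use y R in auto)
  show "summable (\<lambda>N. real N ^ a * exp (-2*pi*real N*y) * majorant (diag_coeffs m cf) N R)"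
  proof (rule summable_comparison_test'[OF sW])
    fix N :: nat
    have Sn0: "0 \<le> majorant (diag_coeffs m cf) N R" unfolding majorant_def by (intro suminf_nonneg diag_coeffs_majorant(1) R) (simp add: R)
    have pe: "real N ^ a * exp (- (pi * y) * real N) \<le> C" unfolding C_def using y by (intro pow_exp_bound) simp
    have "real N ^ a * exp (-2*pi*real N*y) * majorant (diag_coeffs m cf) N R =
        (real N ^ a * exp (- (pi * y) * real N)) * (exp (-2*pi*real N*(y/2)) * majorant (diag_coeffs m cf) N R)"
      by (simp add: exp_add[symmetric] algebra_simps)
    also have "\<dots> \<le> C * (exp (-2*pi*real N*(y/2)) * weighted_row m cf (4 * pi * sqrt R) N)"
    proof -
      have C0: "0 \<le> C" unfolding C_def using y by simp
      show ?thesis using pe diag_coeffs_majorant(2)[OF R, of m cf N] Sn0 C0 by (intro mult_mono mult_left_mono) auto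
    qed
    finally show "norm (real N ^ a * exp (-2*pi*real N*y) * majorant (diag_coeffs m cf) N R) \<le> C * (exp (-2*pi*real N*(y/2)) * weighted_row m cf (4 * pi * sqrt R) N)"
      using Sn0 by simp
  qed
qed

text \<open>The Taylor coefficient of z1^a z2^b of phi computed from its Fourier expansion.\<close>

definition taylor_fourier_coeff :: "nat \<Rightarrow> (nat \<Rightarrow> complex \<Rightarrow> complex) \<Rightarrow> complex \<Rightarrow> nat \<Rightarrow> nat \<Rightarrow> complex" where
  "taylor_fourier_coeff m cf t a b = infsum (\<lambda>(N,r). cf N r * ee (of_nat N * t) * taylor_coeff r a b) (Sigma UNIV (fourier_support m))"

lemma ee_split: "ee (of_nat N * t + r * z1 + cnj r * z2) =
   ee (of_nat N * t) * (exp (2 * pi * \<i> * r * z1) * exp (2 * pi * \<i> * cnj r * z2))"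
  unfolding ee_def by (simp add: exp_add[symmetric] algebra_simps)

lemma taylor_coeff_term: "taylor_coeff r a b * z1^a * z2^b =
   (2 * pi * \<i> * r * z1)^a / fact a * ((2 * pi * \<i> * cnj r * z2)^b / fact b)"
  unfolding taylor_coeff_def by (simp add: power_mult_distrib field_simps)

lemma norm_taylor_coeff_term: "norm (taylor_coeff r a b * z1^a * z2^b) =
   (2 * pi * cmod r * cmod z1)^a / fact a * ((2 * pi * cmod r * cmod z2)^b / fact b)"
  unfolding taylor_coeff_term by (simp add: norm_mult norm_divide norm_power)

text \<open>Expanding both exponentials e(r z1) e(cnj r z2) of the Fourier expansion gives a
  series over ((N,r),(a,b)); it converges absolutely, so it may be summed in either order.\<close>

definition taylor_fourier_term ::
    "(nat \<Rightarrow> complex \<Rightarrow> complex) \<Rightarrow> complex \<Rightarrow> complex \<Rightarrow> complex \<Rightarrow> (nat \<times> complex) \<times> (nat \<times> nat) \<Rightarrow> complex" where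
  "taylor_fourier_term cf t z1 z2 = (\<lambda>(x, y). cf (fst x) (snd x) * ee (of_nat (fst x) * t) *
     (taylor_coeff (snd x) (fst y) (snd y) * z1^(fst y) * z2^(snd y)))"

lemma taylor_fourier_term_summable:
  assumes F: "fourier_expansion m cf phi" and t: "Im t > 0"
  shows "taylor_fourier_term cf t z1 z2 summable_on Sigma UNIV (fourier_support m) \<times> UNIV"
proof -
  define S where "S = Sigma UNIV (fourier_support m)"
  define \<rho> where "\<rho> = 2 * pi * (cmod z1 + cmod z2)"
  have rho: "\<rho> \<ge> 0" unfolding \<rho>_def by simp
  have nsum: "(\<lambda>p. norm (taylor_fourier_term cf t z1 z2 p)) summable_on Sigma S (\<lambda>_. UNIV)"
  proof (rule summable_on_SigmaI)
    fix x :: "nat \<times> complex" assume "x \<in> S"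
    obtain N r where x: "x = (N, r)" by (cases x)
    have "((\<lambda>(a,b). (2 * pi * cmod r * cmod z1)^a / fact a * ((2 * pi * cmod r * cmod z2)^b / fact b)) has_sum
        (exp (2 * pi * cmod r * cmod z1) * exp (2 * pi * cmod r * cmod z2))) UNIV"
      by (rule exp_prod_has_sum)
    from has_sum_cmult_right[OF this, of "norm (cf N r) * exp (-2*pi*real N*Im t)"]
    have h: "((\<lambda>y. norm (cf N r) * exp (-2*pi*real N*Im t) * (\<lambda>(a,b). (2 * pi * cmod r * cmod z1)^a / fact a * ((2 * pi * cmod r * cmod z2)^b / fact b)) y) has_sum
        (norm (cf N r) * exp (-2*pi*real N*Im t) * exp (\<rho> * cmod r))) UNIV"
      unfolding \<rho>_def by (simp add: exp_add[symmetric] algebra_simps)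
    have e: "norm (taylor_fourier_term cf t z1 z2 ((N,r),y)) = norm (cf N r) * exp (-2*pi*real N*Im t) * (\<lambda>(a,b). (2 * pi * cmod r * cmod z1)^a / fact a * ((2 * pi * cmod r * cmod z2)^b / fact b)) y" for y
    proof -
      obtain a b where y: "y = (a, b)" by (cases y)
      show ?thesis unfolding taylor_fourier_term_def y
        by (simp only: prod.case fst_conv snd_conv norm_mult[of "cf N r * ee (of_nat N * t)"] norm_taylor_coeff_term) (simp add: norm_mult norm_ee)
    qed
    show "((\<lambda>y. norm (taylor_fourier_term cf t z1 z2 (x, y))) has_sum (\<lambda>(N,r). norm (cf N r) * exp (-2*pi*real N*Im t) * exp (\<rho> * cmod r)) x) UNIV"
      unfolding x using h by (simp only: e prod.case)
  next
    show "(\<lambda>(N,r). norm (cf N r) * exp (-2*pi*real N*Im t) * exp (\<rho> * cmod r)) summable_on S"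
      unfolding S_def by (rule fourier_exp_weight_summable[OF F t rho])
  qed auto
  then show ?thesis unfolding S_def[symmetric] by (rule abs_summable_summable)
qed

text \<open>Its sum is phi(t, z1, z2), by summing over (a,b) first.\<close>

lemma taylor_fourier_term_has_sum:
  assumes F: "fourier_expansion m cf phi" and t: "Im t > 0"
  shows "(taylor_fourier_term cf t z1 z2 has_sum phi t z1 z2) (Sigma UNIV (fourier_support m) \<times> UNIV)"
proof -
  define S where "S = Sigma UNIV (fourier_support m)"
  have summable_terms: "taylor_fourier_term cf t z1 z2 summable_on S \<times> UNIV"
    unfolding S_def by (rule taylor_fourier_term_summable[OF F t])
  have inner: "((\<lambda>y. taylor_fourier_term cf t z1 z2 (x, y)) has_sum (\<lambda>(n, r). cf n r * ee (of_nat n * t + r * z1 + cnj r * z2)) x) UNIV"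
    if "x \<in> S" for x
  proof -
    obtain N r where x: "x = (N, r)" by (cases x)
    have "((\<lambda>(a,b). (2 * pi * \<i> * r * z1)^a / fact a * ((2 * pi * \<i> * cnj r * z2)^b / fact b)) has_sum
        (exp (2 * pi * \<i> * r * z1) * exp (2 * pi * \<i> * cnj r * z2))) UNIV"
      by (rule exp_prod_has_sum)
    from has_sum_cmult_right[OF this, of "cf N r * ee (of_nat N * t)"]
    have h: "((\<lambda>y. cf N r * ee (of_nat N * t) * (\<lambda>(a,b). (2 * pi * \<i> * r * z1)^a / fact a * ((2 * pi * \<i> * cnj r * z2)^b / fact b)) y) has_sum
        (cf N r * ee (of_nat N * t + r * z1 + cnj r * z2))) UNIV"
      unfolding ee_split by (simp only: mult.assoc)
    have e: "taylor_fourier_term cf t z1 z2 ((N,r),y) = cf N r * ee (of_nat N * t) * (\<lambda>(a,b). (2 * pi * \<i> * r * z1)^a / fact a * ((2 * pi * \<i> * cnj r * z2)^b / fact b)) y" for y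
    proof -
      obtain a b where y: "y = (a, b)" by (cases y)
      show ?thesis unfolding taylor_fourier_term_def y by (simp only: prod.case fst_conv snd_conv taylor_coeff_term)
    qed
    show ?thesis unfolding x using h by (simp only: e prod.case)
  qed
  have "((\<lambda>(n, r). cf n r * ee (of_nat n * t + r * z1 + cnj r * z2)) has_sum infsum (taylor_fourier_term cf t z1 z2) (S \<times> UNIV)) S"
    by (rule has_sum_Sigma'[OF _ inner]) (use summable_terms in simp)
  moreover have "((\<lambda>(n, r). cf n r * ee (of_nat n * t + r * z1 + cnj r * z2)) has_sum phi t z1 z2) S"
    using F t unfolding fourier_expansion_def S_def by blast
  ultimately have "infsum (taylor_fourier_term cf t z1 z2) (S \<times> UNIV) = phi t z1 z2" by (rule has_sum_unique)
  then show ?thesis using summable_terms unfolding S_def[symmetric] by (metis has_sum_infsum)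
qed

lemma taylor_fourier_expansion:
  assumes F: "fourier_expansion m cf phi" and t: "Im t > 0"
  shows "((\<lambda>(a,b). taylor_fourier_coeff m cf t a b * z1^a * z2^b) has_sum phi t z1 z2) UNIV"
    and "(\<lambda>(N,r). cf N r * ee (of_nat N * t) * taylor_coeff r a b) summable_on Sigma UNIV (fourier_support m)"
proof -
  define S where "S = Sigma UNIV (fourier_support m)"
  define G where "G z1 z2 = taylor_fourier_term cf t z1 z2" for z1 z2
  have GS: "(G z1 z2 has_sum phi t z1 z2) (S \<times> UNIV)" for z1 z2
    unfolding G_def S_def by (rule taylor_fourier_term_has_sum[OF F t])
  have sw: "((\<lambda>(y, x). G z1 z2 (x, y)) has_sum phi t z1 z2) (Sigma UNIV (\<lambda>_. S))" for z1 z2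
    using GS[of z1 z2] has_sum_swap by fastforce
  have slice: "(\<lambda>x. G z1 z2 (x, y)) summable_on S" for z1 z2 y
  proof -
    have "(\<lambda>(y, x). G z1 z2 (x, y)) summable_on (Sigma UNIV (\<lambda>_. S))" using sw[of z1 z2] by (rule has_sum_imp_summable)
    from summable_on_SigmaD1[of "\<lambda>y x. G z1 z2 (x, y)", OF this] show ?thesis by simp
  qed
  have sE: "(\<lambda>(N,r). cf N r * ee (of_nat N * t) * taylor_coeff r a' b') summable_on Sigma UNIV (fourier_support m)" for a' b'
    using slice[of 1 1 "(a',b')"] unfolding G_def taylor_fourier_term_def S_def by (simp add: case_prod_unfold)
  then show "(\<lambda>(N,r). cf N r * ee (of_nat N * t) * taylor_coeff r a b) summable_on Sigma UNIV (fourier_support m)" .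
  have "((\<lambda>y. infsum (\<lambda>x. G z1 z2 (x, y)) S) has_sum phi t z1 z2) UNIV"
    by (rule has_sum_Sigma'[OF sw]) (use slice in auto)
  moreover have "infsum (\<lambda>x. G z1 z2 (x, y)) S = (\<lambda>(a,b). taylor_fourier_coeff m cf t a b * z1^a * z2^b) y" for y
  proof -
    obtain a b where y: "y = (a, b)" by (cases y)
    have "infsum (\<lambda>x. G z1 z2 (x, y)) S = infsum (\<lambda>x. (\<lambda>(N,r). cf N r * ee (of_nat N * t) * taylor_coeff r a b) x * (z1^a * z2^b)) S"
      unfolding G_def taylor_fourier_term_def y by (simp add: case_prod_unfold mult.assoc)
    also have "\<dots> = taylor_fourier_coeff m cf t a b * (z1^a * z2^b)"
      unfolding taylor_fourier_coeff_def S_def by (rule infsum_cmult_left) (use sE in simp)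
    finally show ?thesis unfolding y by (simp add: mult.assoc)
  qed
  ultimately show "((\<lambda>(a,b). taylor_fourier_coeff m cf t a b * z1^a * z2^b) has_sum phi t z1 z2) UNIV" by simp
qed

lemma taylor_coeff_eq:
  fixes chi :: "nat \<Rightarrow> nat \<Rightarrow> complex \<Rightarrow> complex"
  assumes F: "fourier_expansion m cf phi" and t: "Im t > 0"
    and P: "\<And>z1 z2. ((\<lambda>(\<alpha>, \<beta>). chi \<alpha> \<beta> t * z1 ^ \<alpha> * z2 ^ \<beta>) has_sum phi t z1 z2) UNIV"
  shows "chi a b t = taylor_fourier_coeff m cf t a b"
proof -
  have "((\<lambda>(a,b). (chi a b t - taylor_fourier_coeff m cf t a b) * z1^a * z2^b) has_sum 0) UNIV" for z1 z2
  proof -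
    have h2: "((\<lambda>p. (-1) * (\<lambda>(a,b). taylor_fourier_coeff m cf t a b * z1^a * z2^b) p) has_sum ((-1) * phi t z1 z2)) UNIV"
      by (rule has_sum_cmult_right[OF taylor_fourier_expansion(1)[OF F t]])
    have "((\<lambda>p. (\<lambda>(\<alpha>, \<beta>). chi \<alpha> \<beta> t * z1 ^ \<alpha> * z2 ^ \<beta>) p + (-1) * (\<lambda>(a,b). taylor_fourier_coeff m cf t a b * z1^a * z2^b) p) has_sum
        (phi t z1 z2 + (-1) * phi t z1 z2)) UNIV"
      by (rule has_sum_add[OF P h2])
    moreover have "(\<lambda>p. (\<lambda>(\<alpha>, \<beta>). chi \<alpha> \<beta> t * z1 ^ \<alpha> * z2 ^ \<beta>) p + (-1) * (\<lambda>(a,b). taylor_fourier_coeff m cf t a b * z1^a * z2^b) p) =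
        (\<lambda>(a,b). (chi a b t - taylor_fourier_coeff m cf t a b) * z1^a * z2^b)"
      by (rule ext) (auto simp: algebra_simps split: prod.splits)
    ultimately show ?thesis by simp
  qed
  from double_power_series_zero_unique[OF this] show ?thesis by simp
qed

lemma diag_taylor_qseries:
  assumes F: "fourier_expansion m cf phi" and t: "Im t > 0"
  shows "taylor_fourier_coeff m cf t n n = qseries (\<lambda>N. diag_coeffs m cf N n) t"
proof -
  have sm: "(\<lambda>(N,r). cf N r * ee (of_nat N * t) * taylor_coeff r n n) summable_on Sigma UNIV (fourier_support m)"
    by (rule taylor_fourier_expansion(2)[OF F t])
  have "taylor_fourier_coeff m cf t n n = infsum (\<lambda>N. infsum (\<lambda>r. (\<lambda>(N,r). cf N r * ee (of_nat N * t) * taylor_coeff r n n) (N, r)) (fourier_support m N)) UNIV"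
    unfolding taylor_fourier_coeff_def by (rule infsum_Sigma_banach[OF sm, symmetric])
  also have "\<dots> = infsum (\<lambda>N. diag_coeffs m cf N n * ee (of_nat N * t)) UNIV"
  proof (rule infsum_cong)
    fix N :: nat
    have "infsum (\<lambda>r. (\<lambda>(N,r). cf N r * ee (of_nat N * t) * taylor_coeff r n n) (N, r)) (fourier_support m N) =
        (\<Sum>r\<in>fourier_support m N. cf N r * ee (of_nat N * t) * taylor_coeff r n n)" using finite_fourier_support[of m N] by simp
    also have "\<dots> = diag_coeffs m cf N n * ee (of_nat N * t)"
      unfolding diag_coeffs_def sum_distrib_right by (rule sum.cong) (simp_all add: mult_ac)
    finally show "infsum (\<lambda>r. (\<lambda>(N,r). cf N r * ee (of_nat N * t) * taylor_coeff r n n) (N, r)) (fourier_support m N) = diag_coeffs m cf N n * ee (of_nat N * t)" .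
  qed
  also have "\<dots> = qseries (\<lambda>N. diag_coeffs m cf N n) t"
    unfolding qseries_def by (rule infsum_suminf_norm[OF qseries_abs_summable[OF admissible_coeff_rapid_decay[OF admissible_diag_coeffs[OF F]] t]])
  finally show ?thesis .
qed

lemma jseries_terms_summable:
  assumes g: "admissible \<beta>" and s: "Im s > 0"
  shows "(\<lambda>(N, \<nu>). \<beta> N \<nu> * x^\<nu> * ee (of_nat N * s)) summable_on UNIV \<times> UNIV"
proof -
  define h where "h N \<nu> = \<beta> N \<nu> * x^\<nu> * ee (of_nat N * s)" for N \<nu>
  have nsum: "(\<lambda>p. norm ((\<lambda>(N, \<nu>). h N \<nu>) p)) summable_on Sigma UNIV (\<lambda>_. UNIV)"
  proof (rule summable_on_SigmaI)
    fix N :: nat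
    have su: "summable (\<lambda>\<nu>. exp (-2*pi*real N*Im s) * (norm (\<beta> N \<nu>) * norm x ^ \<nu>))"
      by (intro summable_mult admissible_radius[OF g]) simp
    have "((\<lambda>\<nu>. exp (-2*pi*real N*Im s) * (norm (\<beta> N \<nu>) * norm x ^ \<nu>)) has_sum
         (\<Sum>\<nu>. exp (-2*pi*real N*Im s) * (norm (\<beta> N \<nu>) * norm x ^ \<nu>))) UNIV"
      by (rule norm_summable_imp_has_sum[OF _ summable_sums[OF su]]) (use su in simp)
    moreover have "(\<Sum>\<nu>. exp (-2*pi*real N*Im s) * (norm (\<beta> N \<nu>) * norm x ^ \<nu>)) = exp (-2*pi*real N*Im s) * majorant \<beta> N (norm x)"
      unfolding majorant_def by (rule suminf_mult[OF admissible_radius[OF g]]) simp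
    ultimately show "((\<lambda>\<nu>. norm ((\<lambda>(N, \<nu>). h N \<nu>) (N, \<nu>))) has_sum exp (-2*pi*real N*Im s) * majorant \<beta> N (norm x)) UNIV"
      unfolding h_def by (simp add: norm_mult norm_power norm_ee mult_ac)
  next
    have "summable (\<lambda>N. real N ^ 0 * exp (-2*pi*real N*Im s) * majorant \<beta> N (norm x))"
      by (rule admissible_decay[OF g s]) simp
    then show "(\<lambda>N. exp (-2*pi*real N*Im s) * majorant \<beta> N (norm x)) summable_on UNIV"
      by (intro summable_nonneg_imp_summable_on) (auto intro!: mult_nonneg_nonneg majorant_nonneg g)
  qed auto
  have "(\<lambda>(N, \<nu>). h N \<nu>) summable_on UNIV \<times> UNIV"
    by (rule abs_summable_summable) (use nsum in simp)
  then show ?thesis unfolding h_def .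
qed

lemma diag_part_jseries:
  fixes chi :: "nat \<Rightarrow> nat \<Rightarrow> complex \<Rightarrow> complex"
  assumes g: "admissible \<beta>" and s: "Im s > 0"
    and chi_qseries: "\<And>\<nu>. chi \<nu> \<nu> s = qseries (\<lambda>N. \<beta> N \<nu>) s"
  shows "diag_part chi s a b = jseries \<beta> s (a * b)"
proof -
  define x where "x = a * b"
  define h where "h N \<nu> = \<beta> N \<nu> * x^\<nu> * ee (of_nat N * s)" for N \<nu>
  have sm: "(\<lambda>(N, \<nu>). h N \<nu>) summable_on UNIV \<times> UNIV"
    unfolding h_def by (rule jseries_terms_summable[OF g s])
  have sw: "infsum (\<lambda>N. infsum (\<lambda>\<nu>. h N \<nu>) UNIV) UNIV = infsum (\<lambda>\<nu>. infsum (\<lambda>N. h N \<nu>) UNIV) UNIV"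
    by (rule infsum_swap_banach[OF sm])
  have L: "infsum (\<lambda>\<nu>. h N \<nu>) UNIV = pseries \<beta> N x * ee (of_nat N * s)" for N
  proof -
    have su: "summable (\<lambda>\<nu>. norm (\<beta> N \<nu> * x^\<nu> * ee (of_nat N * s)))"
      using summable_mult2[OF pseries_abs_summable[OF g, of N x], of "norm (ee (of_nat N * s))"] by (simp add: norm_mult)
    have "infsum (\<lambda>\<nu>. h N \<nu>) UNIV = (\<Sum>\<nu>. \<beta> N \<nu> * x^\<nu> * ee (of_nat N * s))"
      unfolding h_def by (rule infsum_suminf_norm[OF su])
    also have "\<dots> = pseries \<beta> N x * ee (of_nat N * s)" unfolding pseries_def by (rule suminf_mult2[OF pseries_summable[OF g], symmetric])
    finally show ?thesis .
  qed
  have R: "infsum (\<lambda>N. h N \<nu>) UNIV = chi \<nu> \<nu> s * x^\<nu>" for \<nu>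
  proof -
    have su: "summable (\<lambda>N. norm (\<beta> N \<nu> * ee (of_nat N * s) * x^\<nu>))"
      using summable_mult2[OF qseries_abs_summable[OF admissible_coeff_rapid_decay[OF g] s, of \<nu>], of "norm (x^\<nu>)"] by (simp add: norm_mult)
    have "infsum (\<lambda>N. h N \<nu>) UNIV = (\<Sum>N. \<beta> N \<nu> * ee (of_nat N * s) * x^\<nu>)"
      unfolding h_def by (subst infsum_suminf_norm[OF su, symmetric]) (simp add: mult_ac)
    also have "\<dots> = qseries (\<lambda>N. \<beta> N \<nu>) s * x^\<nu>" unfolding qseries_def by (rule suminf_mult2[OF qseries_summable[OF admissible_coeff_rapid_decay[OF g] s], symmetric])
    finally show ?thesis using chi_qseries by simp
  qed
  have smR: "(\<lambda>\<nu>. infsum (\<lambda>N. h N \<nu>) UNIV) summable_on UNIV"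
  proof -
    have sw2: "(\<lambda>(\<nu>, N). h N \<nu>) summable_on UNIV \<times> UNIV" using sm summable_on_swap by fastforce
    have sl: "(\<lambda>N. h N \<nu>) summable_on UNIV" for \<nu>
      using summable_on_SigmaD1[of "\<lambda>\<nu> N. h N \<nu>", OF sw2] by simp
    have "(\<lambda>x. infsum (\<lambda>y. (\<lambda>(\<nu>, N). h N \<nu>) (x, y)) UNIV) summable_on UNIV"
      by (rule summable_on_SigmaD[OF sw2]) (simp add: sl)
    then show ?thesis by simp
  qed
  have "diag_part chi s a b = (\<Sum>\<nu>. chi \<nu> \<nu> s * x^\<nu>)" unfolding diag_part_def x_def ..
  also have "\<dots> = infsum (\<lambda>\<nu>. infsum (\<lambda>N. h N \<nu>) UNIV) UNIV" using infsum_suminf[OF smR] R by simp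
  also have "\<dots> = infsum (\<lambda>N. infsum (\<lambda>\<nu>. h N \<nu>) UNIV) UNIV" by (rule sw[symmetric])
  also have "\<dots> = infsum (\<lambda>N. pseries \<beta> N x * ee (of_nat N * s)) UNIV" using L by simp
  also have "\<dots> = jseries \<beta> s x" unfolding jseries_def qseries_def
    by (rule infsum_suminf_norm[OF qseries_abs_summable[OF admissible_pseries_rapid_decay[OF g] s]])
  finally show ?thesis unfolding x_def .
qed

section \<open>Weight one\<close>

lemma jacobi_form_unit_i:
  assumes J: "jacobi_form k m phi" and t: "Im t > 0"
  shows "phi t (\<i> * z1) (- \<i> * z2) = \<i> ^ k * phi t z1 z2"
proof -
  have "\<i> \<in> units_K" and "t \<in> upper_half" using t unfolding units_K_def upper_half_def by simp_all
  then have "slash k m \<i> 1 0 0 1 phi t z1 z2 = phi t z1 z2"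
    using J unfolding jacobi_form_def by fastforce
  moreover have "slash k m \<i> 1 0 0 1 phi t z1 z2 = inverse (\<i> ^ k) * phi t (\<i> * z1) (- \<i> * z2)"
    unfolding slash_def by simp
  ultimately show ?thesis by (simp add: field_simps)
qed

text \<open>For k = 1 the slash action of the unit i gives phi(t, i z1, -i z2) = i phi(t, z1, z2);
  comparing Taylor coefficients, (z1 z2)^nu is invariant while the factor i is not, so all
  diagonal Taylor coefficients vanish.\<close>

lemma diag_taylor_vanish_weight_1:
  fixes chi :: "nat \<Rightarrow> nat \<Rightarrow> complex \<Rightarrow> complex"
  assumes J: "jacobi_form 1 m phi"
    and P: "\<And>t z1 z2. t \<in> upper_half \<Longrightarrow> ((\<lambda>(\<alpha>, \<beta>). chi \<alpha> \<beta> t * z1 ^ \<alpha> * z2 ^ \<beta>) has_sum phi t z1 z2) UNIV"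
    and t: "Im t > 0"
  shows "chi \<nu> \<nu> t = 0"
proof -
  have tU: "t \<in> upper_half" using t unfolding upper_half_def by simp
  have ph: "phi t (\<i> * z1) (- \<i> * z2) = \<i> * phi t z1 z2" for z1 z2
    using jacobi_form_unit_i[OF J t] by simp
  define d where "d a b = chi a b t * (\<i>^a * (- \<i>)^b - \<i>)" for a b
  have "((\<lambda>(a,b). d a b * z1^a * z2^b) has_sum 0) UNIV" for z1 z2
  proof -
    have h1: "((\<lambda>(a,b). chi a b t * (\<i> * z1)^a * (- \<i> * z2)^b) has_sum phi t (\<i> * z1) (- \<i> * z2)) UNIV"
      using P[OF tU] .
    have h2: "((\<lambda>p. (- \<i>) * (\<lambda>(a,b). chi a b t * z1^a * z2^b) p) has_sum ((- \<i>) * phi t z1 z2)) UNIV"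
      by (rule has_sum_cmult_right[OF P[OF tU]])
    have "((\<lambda>p. (\<lambda>(a,b). chi a b t * (\<i> * z1)^a * (- \<i> * z2)^b) p + (- \<i>) * (\<lambda>(a,b). chi a b t * z1^a * z2^b) p) has_sum
        (phi t (\<i> * z1) (- \<i> * z2) + (- \<i>) * phi t z1 z2)) UNIV"
      by (rule has_sum_add[OF h1 h2])
    moreover have "(\<lambda>p. (\<lambda>(a,b). chi a b t * (\<i> * z1)^a * (- \<i> * z2)^b) p + (- \<i>) * (\<lambda>(a,b). chi a b t * z1^a * z2^b) p)
        = (\<lambda>(a,b). d a b * z1^a * z2^b)"
      by (rule ext) (auto simp: d_def power_mult_distrib power_minus[of "\<i> * z2"] power_minus[of "\<i>"] algebra_simps split: prod.splits)
    ultimately show ?thesis using ph[of z1 z2] by simp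
  qed
  from double_power_series_zero_unique[OF this] have "d \<nu> \<nu> = 0" .
  moreover have "\<i>^\<nu> * (- \<i>)^\<nu> = (1::complex)"
    by (simp add: power_mult_distrib[symmetric])
  ultimately have "chi \<nu> \<nu> t * (1 - \<i>) = 0" unfolding d_def by simp
  moreover have "(1 - \<i>) \<noteq> 0" by (simp add: complex_eq_iff)
  ultimately show ?thesis by simp
qed

section \<open>The inversion formula\<close>

lemma higher_deriv_zero: "(deriv ^^ a) (\<lambda>_. (0::complex)) = (\<lambda>_. 0)"
  by (induction a) (auto simp: deriv_const)

definition column_moment ::
    "nat \<Rightarrow> nat \<Rightarrow> (nat \<Rightarrow> nat \<Rightarrow> complex) \<Rightarrow> complex \<Rightarrow> nat \<Rightarrow> nat \<Rightarrow> nat \<Rightarrow> complex" where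
  "column_moment k m \<beta> t j n a = qseries (\<lambda>N. (2 * pi * \<i> * of_nat N)^a * Dtilde_coeffs k m \<beta> j N n) t"

lemma column_moment_higher_deriv:
  assumes g: "admissible \<beta>" and t: "Im t > 0"
  shows "column_moment k m \<beta> t j n a = (deriv ^^ a) (qseries (\<lambda>N. Dtilde_coeffs k m \<beta> j N n)) t"
  unfolding column_moment_def
  by (rule qseries_higher_deriv[OF admissible_coeff_rapid_decay[OF admissible_Dtilde_coeffs[OF g]] t, symmetric])

text \<open>Since L acts on the coefficients by a three-term rule, the moments satisfy the
  ladder recursion of the first section with A = 8 pi i m.\<close>

lemma column_moment_ladder:
  assumes g: "admissible \<beta>" and t: "Im t > 0"
  shows "column_moment k m \<beta> t (Suc j) n a =
    8 * pi * \<i> * of_nat m * column_moment k m \<beta> t j n (Suc a)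
      - 4 * of_nat (Suc n) * of_nat (n + k + 2*j) * column_moment k m \<beta> t j (Suc n) a"
proof -
  define B where "B = Dtilde_coeffs k m \<beta> j"
  have fg: "rapid_decay (\<lambda>N. (2 * pi * \<i> * of_nat N)^a * B N n)" for a n
    unfolding B_def
    by (rule rapid_decay_mult_pow[OF admissible_coeff_rapid_decay[OF admissible_Dtilde_coeffs[OF g]]])
  have eq: "(2 * pi * \<i> * of_nat N)^a * Dtilde_coeffs k m \<beta> (Suc j) N n =
     (8 * pi * \<i> * of_nat m) * ((2 * pi * \<i> * of_nat N)^(Suc a) * B N n) +
     (- 4 * of_nat (Suc n) * of_nat (n + k + 2*j)) * ((2 * pi * \<i> * of_nat N)^a * B N (Suc n)) +
     0 * ((2 * pi * \<i> * of_nat N)^a * B N n)" for N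
    unfolding B_def Dtilde_coeffs.simps L_coeffs_eq by (simp add: algebra_simps del: of_nat_Suc)
  have "column_moment k m \<beta> t (Suc j) n a = (8 * pi * \<i> * of_nat m) * column_moment k m \<beta> t j n (Suc a) +
     (- 4 * of_nat (Suc n) * of_nat (n + k + 2*j)) * column_moment k m \<beta> t j (Suc n) a + 0 * column_moment k m \<beta> t j n a"
    unfolding column_moment_def eq B_def[symmetric] by (rule qseries_linear3[OF fg fg fg t])
  then show ?thesis by (simp add: algebra_simps)
qed

text \<open>The derivatives of xi_j = D_j phi are the moments of the column n = 0, because
  tilde D_j phi_0 = H_{B_j}(tau, z1 z2) and D_j reads off its value at x = 0.\<close>

lemma Dop_higher_deriv:
  assumes g: "admissible \<beta>" and t: "Im t > 0"
    and diag: "\<And>s a b. Im s > 0 \<Longrightarrow> diag_part chi s a b = jseries \<beta> s (a * b)"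
  shows "(deriv ^^ a) (Dop k m j chi) t = column_moment k m \<beta> t j 0 a"
proof -
  have Dop: "Dop k m j chi s = qseries (\<lambda>N. Dtilde_coeffs k m \<beta> j N 0) s" if s: "Im s > 0" for s
  proof -
    have "Dtilde k m j (diag_part chi) s z1 z2 = jseries (Dtilde_coeffs k m \<beta> j) s (z1 * z2)"
      if "z1 \<noteq> 0" "z2 \<noteq> 0" for z1 z2
      by (rule Dtilde_jseries[OF g diag s that])
    from Dop_jseries[OF admissible_Dtilde_coeffs[OF g] s this] show ?thesis by (simp add: jseries_at_0)
  qed
  have "(deriv ^^ a) (Dop k m j chi) t = (deriv ^^ a) (qseries (\<lambda>N. Dtilde_coeffs k m \<beta> j N 0)) t"
    by (rule higher_deriv_cong_ev[OF _ refl]) (rule eventually_mono[OF eventually_upper_half[OF t]], simp add: Dop)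
  then show ?thesis by (simp add: column_moment_higher_deriv[OF g t])
qed

lemma column_moment_vanish:
  assumes g: "admissible \<beta>" and t: "Im t > 0"
    and zero: "\<And>s n. Im s > 0 \<Longrightarrow> qseries (\<lambda>N. \<beta> N n) s = 0"
  shows "column_moment k m \<beta> t j n a = 0"
proof (induction j arbitrary: n a)
  case 0
  have "column_moment k m \<beta> t 0 n a = (deriv ^^ a) (qseries (\<lambda>N. \<beta> N n)) t"
    using column_moment_higher_deriv[OF g t, of k m 0] by simp
  also have "\<dots> = (deriv ^^ a) (\<lambda>_. 0) t"
    by (rule higher_deriv_cong_ev[OF _ refl]) (rule eventually_mono[OF eventually_upper_half[OF t]], simp add: zero)
  finally show ?case by (simp add: higher_deriv_zero)
next
  case (Suc j)
  then show ?case by (simp add: column_moment_ladder[OF g t])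
qed

text \<open>For k \<ge> 2 this is the
  ladder inversion; for k = 1 both sides vanish.\<close>

lemma diag_inversion:
  fixes chi :: "nat \<Rightarrow> nat \<Rightarrow> complex \<Rightarrow> complex"
  assumes k: "k > 0" and g: "admissible \<beta>" and t: "Im t > 0"
    and chi: "\<And>s \<nu>. Im s > 0 \<Longrightarrow> chi \<nu> \<nu> s = qseries (\<lambda>N. \<beta> N \<nu>) s"
    and diag: "\<And>s a b. Im s > 0 \<Longrightarrow> diag_part chi s a b = jseries \<beta> s (a * b)"
    and weight_1: "\<And>s \<nu>. k = 1 \<Longrightarrow> Im s > 0 \<Longrightarrow> chi \<nu> \<nu> s = 0"
  shows "chi \<nu> \<nu> t =
    (\<Sum>\<mu>\<le>\<nu>. inv_coeff k \<nu> \<mu> * (8 * pi * \<i> * of_nat m)^\<mu> * (deriv ^^ \<mu>) (Dop k m (\<nu> - \<mu>) chi) t)"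
proof (cases "k = 1")
  case True
  have "column_moment k m \<beta> t j 0 a = 0" for j a
    by (rule column_moment_vanish[OF g t]) (simp add: chi[symmetric] weight_1[OF True])
  then show ?thesis using weight_1[OF True t] by (simp add: Dop_higher_deriv[OF g t diag])
next
  case False
  with k have k2: "k \<ge> 2" by simp
  have "column_moment k m \<beta> t 0 \<nu> 0 =
      (\<Sum>\<mu>\<le>\<nu>. inv_coeff (k + 2*0) \<nu> \<mu> * (8 * pi * \<i> * of_nat m)^\<mu> * column_moment k m \<beta> t (0 + \<nu> - \<mu>) 0 (0 + \<mu>))"
    by (rule ladder_inversion[where w = "column_moment k m \<beta> t" and A = "8 * pi * \<i> * of_nat m",
          OF column_moment_ladder[OF g t] k2])
  moreover have "column_moment k m \<beta> t 0 \<nu> 0 = chi \<nu> \<nu> t"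
    unfolding column_moment_def by (simp add: chi[OF t])
  ultimately show ?thesis by (simp add: Dop_higher_deriv[OF g t diag])
qed

lemma inv_coeff_sum_expand:
  "(\<Sum>\<mu>\<le>\<nu>. inv_coeff k \<nu> \<mu> * A^\<mu> * X \<mu>) =
    1 / (fact \<nu> * 4 ^ \<nu>) *
      (\<Sum>\<mu>\<le>\<nu>. (-1) ^ (\<nu> - \<mu>) * A ^ \<mu> * of_nat (\<nu> choose \<mu>) *
         (of_nat (k + 2 * \<nu> - 2 * \<mu> - 1) * fact (k + \<nu> - \<mu> - 2) / fact (k + 2 * \<nu> - \<mu> - 1)) * X \<mu>)"
  unfolding inv_coeff_def sum_distrib_left by (rule sum.cong) (simp_all add: field_simps)

lemma jacobi_form_diag_data:
  fixes chi :: "nat \<Rightarrow> nat \<Rightarrow> complex \<Rightarrow> complex"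
  assumes J: "jacobi_form k m phi"
    and P: "\<And>t z1 z2. t \<in> upper_half \<Longrightarrow>
           ((\<lambda>(\<alpha>, \<beta>). chi \<alpha> \<beta> t * z1 ^ \<alpha> * z2 ^ \<beta>) has_sum phi t z1 z2) UNIV"
  obtains \<beta> where "admissible \<beta>"
    and "\<And>s \<nu>. Im s > 0 \<Longrightarrow> chi \<nu> \<nu> s = qseries (\<lambda>N. \<beta> N \<nu>) s"
    and "\<And>s a b. Im s > 0 \<Longrightarrow> diag_part chi s a b = jseries \<beta> s (a * b)"
proof -
  obtain cf :: "nat \<Rightarrow> complex \<Rightarrow> complex" where cf: "\<forall>t z1 z2. t \<in> upper_half \<longrightarrow>
        ((\<lambda>(n, r). cf n r * ee (of_nat n * t + r * z1 + cnj r * z2)) has_sum phi t z1 z2)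
          {(n, r). r \<in> dual_lattice \<and> (cmod r)\<^sup>2 \<le> real (n * m)}"
    using J unfolding jacobi_form_def by blast
  have F: "fourier_expansion m cf phi"
    unfolding fourier_expansion_def fourier_index_set_eq[symmetric] using cf unfolding upper_half_def by simp
  define \<beta> where "\<beta> = diag_coeffs m cf"
  have g: "admissible \<beta>" unfolding \<beta>_def by (rule admissible_diag_coeffs[OF F])
  have chi_qseries: "chi \<nu> \<nu> s = qseries (\<lambda>N. \<beta> N \<nu>) s" if s: "Im s > 0" for s \<nu>
  proof -
    have sU: "s \<in> upper_half" using s unfolding upper_half_def by simp
    have "chi \<nu> \<nu> s = taylor_fourier_coeff m cf s \<nu> \<nu>" by (rule taylor_coeff_eq[where chi=chi, OF F s P[OF sU]])
    also have "\<dots> = qseries (\<lambda>N. \<beta> N \<nu>) s" unfolding \<beta>_def by (rule diag_taylor_qseries[OF F s])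
    finally show ?thesis .
  qed
  have "diag_part chi s a b = jseries \<beta> s (a * b)" if s: "Im s > 0" for s a b
    by (rule diag_part_jseries[where chi=chi, OF g s chi_qseries[OF s]])
  with g chi_qseries show ?thesis by (rule that)
qed

theorem mainTheorem6:
  fixes k m :: nat
    and phi :: "complex \<Rightarrow> complex \<Rightarrow> complex \<Rightarrow> complex"
    and chi :: "nat \<Rightarrow> nat \<Rightarrow> complex \<Rightarrow> complex"
    and \<xi> :: "nat \<Rightarrow> complex \<Rightarrow> complex"
  assumes "k > 0" and "m > 0"
    and "jacobi_form k m phi"
    and "\<And>t z1 z2. t \<in> upper_half \<Longrightarrow>
           ((\<lambda>(\<alpha>, \<beta>). chi \<alpha> \<beta> t * z1 ^ \<alpha> * z2 ^ \<beta>) has_sum phi t z1 z2) UNIV"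
    and "\<And>\<nu>. \<xi> \<nu> = Dop k m \<nu> chi"
  shows "\<forall>\<nu>. \<forall>t\<in>upper_half.
    chi \<nu> \<nu> t =
      1 / (fact \<nu> * 4 ^ \<nu>) *
      (\<Sum>\<mu>\<le>\<nu>. (-1) ^ (\<nu> - \<mu>) * (8 * pi * \<i> * of_nat m) ^ \<mu> * of_nat (\<nu> choose \<mu>) *
         (of_nat (k + 2 * \<nu> - 2 * \<mu> - 1) * fact (k + \<nu> - \<mu> - 2) / fact (k + 2 * \<nu> - \<mu> - 1)) *
         (deriv ^^ \<mu>) (\<xi> (\<nu> - \<mu>)) t)"
proof -
  obtain \<beta> where g: "admissible \<beta>"
    and chi: "\<And>s \<nu>. Im s > 0 \<Longrightarrow> chi \<nu> \<nu> s = qseries (\<lambda>N. \<beta> N \<nu>) s"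
    and diag: "\<And>s a b. Im s > 0 \<Longrightarrow> diag_part chi s a b = jseries \<beta> s (a * b)"
    using jacobi_form_diag_data[OF assms(3,4)] by blast
  have weight_1: "chi \<nu> \<nu> s = 0" if "k = 1" "Im s > 0" for s \<nu>
    using diag_taylor_vanish_weight_1[of m phi chi s \<nu>] assms(3,4) that by simp
  have "\<forall>\<nu>. \<forall>t\<in>upper_half.
      chi \<nu> \<nu> t = (\<Sum>\<mu>\<le>\<nu>. inv_coeff k \<nu> \<mu> * (8 * pi * \<i> * of_nat m)^\<mu> * (deriv ^^ \<mu>) (\<xi> (\<nu> - \<mu>)) t)"
    unfolding assms(5) upper_half_def
    using diag_inversion[OF assms(1) g _ chi diag weight_1] by blast
  then show ?thesis by (simp only: inv_coeff_sum_expand)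
qed

end
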